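(* Let $B$ be a complex manifold, let $\mathcal L\to B$ be a BLS field and let $\mathcal H\to B$ be an integrable BLS subfield of $\mathcal L$, with induced connection $\nabla^{\mathcal H}=\mathcal P\nabla^{\mathcal L}$ and curvature $\Theta^{\mathcal H}$. Then $\Theta^{\mathcal H}$ is an operator-valued $(1,1)$-form, i.e. $\Theta^{\mathcal H}_{\sigma\tau}\mathfrak f=0$ and $\Theta^{\mathcal H}_{\bar\sigma\bar\tau}\mathfrak f=0$ for all $(1,0)$-vector fields $\sigma,\tau$ and smooth sections $\mathfrak f$ of $\mathcal H$ on an open set. Moreover, for every open $U\subset B$, all $\mathfrak f,\mathfrak g\in\Gamma(U,\mathscr C^\infty(\mathcal H))$ and all $\sigma,\tau\in\Gamma(U,T^{1,0}_B)$, $$(\Theta^{\mathcal H}_{\sigma\bar\tau}\mathfrak f,\mathfrak g)=(\Theta^{\mathcal L}_{\sigma\bar\tau}\mathfrak f,\mathfrak g)-(\mathcal P^\perp\nabla^{\mathcal L}_\sigma\mathfrak f,\mathcal P^\perp\nabla^{\mathcal L}_\tau\mathfrak g).$$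
   Context: A Hilbert field $\mathcal L\to B$ is a set-theoretic map whose fibers $\mathcal L_b$ are Hilbert spaces with inner products $(\cdot,\cdot)_b$; a section is a map $\mathfrak f$ with $\mathfrak f(b)\in\mathcal L_b$. A smooth structure is a sheaf $\mathscr C^\infty(\mathcal L)$ of sections ($\Gamma(U,\mathscr C^\infty(\mathcal L))$ a $\mathscr C^\infty(U)$-module) such that for each $b$ the values at $b$ of germs in the stalk form a dense subspace of $\mathcal L_b$; the metric is smooth if $b\mapsto(\mathfrak f(b),\mathfrak g(b))_b$ is smooth for smooth local sections. A connection assigns to complex vector fields $\sigma$ and smooth sections $\mathfrak f$ on open $U$ a smooth section $\nabla_\sigma\mathfrak f$, $\mathscr C^\infty$-linear in $\sigma$ and satisfying $\nabla_\sigma(r\mathfrak f)=(\sigma r)\mathfrak f+r\nabla_\sigma\mathfrak f$; it is metric-compatible if $\sigma(\mathfrak f,\mathfrak g)=(\nabla_\sigma\mathfrak f,\mathfrak g)+(\mathfrak f,\nabla_{\bar\sigma}\mathfrak g)$. A smooth Hilbert field has a smooth structure, smooth metric and compatible connection; its curvature is $\Theta_{\sigma\tau}\mathfrak f:=\nabla_\sigma\nabla_\tau\mathfrak f-\nabla_\tau\nabla_\sigma\mathfrak f-\nabla_{[\sigma,\tau]}\mathfrak f$. Now $B$ is a complex manifold. An almost complex structure on a Hilbert field with smooth structure is an operator assigning to $(0,1)$-vector fields $\sigma$ and smooth sections $\mathfrak f$ (on open sets) a smooth section $\bar\partial^{\mathcal L}\mathfrak f(\sigma)$, satisfying $\bar\partial^{\mathcal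 L}(r\mathfrak f)(\sigma)=(\bar\partial r)(\sigma)\mathfrak f+r\,\bar\partial^{\mathcal L}\mathfrak f(\sigma)$; it is integrable if $\bar\partial^{\mathcal L}(\bar\partial^{\mathcal L}\mathfrak f(\tau))(\sigma)-\bar\partial^{\mathcal L}(\bar\partial^{\mathcal L}\mathfrak f(\sigma))(\tau)-\bar\partial^{\mathcal L}\mathfrak f([\sigma,\tau])=0$ for all $(0,1)$-vector fields $\sigma,\tau$ and smooth sections $\mathfrak f$ on open sets. A BLS field is a smooth Hilbert field with an almost complex structure such that $\nabla^{\mathcal L}_\sigma\mathfrak f=\bar\partial^{\mathcal L}\mathfrak f(\sigma)$ for all $(0,1)$-vector fields $\sigma$. A BLS subfield $\mathcal H\subset\mathcal L$ consists of closed subspaces $\mathcal H_b\subset\mathcal L_b$ (restricted inner products) with smooth structure $\mathscr C^\infty(\mathcal H)$ = sheaf of smooth sections of $\mathcal L$ with values in $\mathcal H_b$ for all $b$ (values at $b$ dense in $\mathcal H_b$), such that $\bar\partial^{\mathcal L}\mathfrak f(\sigma)\in\mathscr C^\infty(\mathcal H)$ for $\mathfrak f\in\mathscr C^\infty(\mathcal H)$ (and $\bar\partial^{\mathcal H}:=\bar\partial^{\mathcal L}|_{\mathcal H}$), and such that the fiberwise orthogonal projection $\mathcal P$ onto $\mathcal H$ maps smooth sections of $\mathcal L$ to smooth sections. It is integrable if $\bar\partial^{\mathcal H}$ is integrable. $\mathcal P^\perp:=\mathrm{Id}-\mathcal P$; the induced connection is $\nabla^{\mathcal H}:=\mathcal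 P\nabla^{\mathcal L}$ and $\Theta^{\mathcal H}$ is its curvature. *)

theory Defs
  imports "HOL-Analysis.Analysis"
begin

fun Ck_on :: "nat \<Rightarrow> 'a::real_normed_vector set \<Rightarrow> ('a \<Rightarrow> 'c::real_normed_vector) \<Rightarrow> bool" where
  "Ck_on 0 S f = continuous_on S f"
| "Ck_on (Suc k) S f =
     ((\<forall>x\<in>S. f differentiable (at x)) \<and> (\<forall>v. Ck_on k S (\<lambda>x. frechet_derivative f (at x) v)))"

definition smooth_on :: "'a::real_normed_vector set \<Rightarrow> ('a \<Rightarrow> 'c::real_normed_vector) \<Rightarrow> bool" where
  "smooth_on S f \<longleftrightarrow> (\<forall>k. Ck_on k S f)"

definition cx_holo_map :: "(complex^'n) set \<Rightarrow> (complex^'n \<Rightarrow> complex^'m) \<Rightarrow> bool" where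
  "cx_holo_map S F \<longleftrightarrow>
     (\<forall>x\<in>S. \<exists>D. (F has_derivative D) (at x) \<and> (\<forall>c v. D (c *s v) = c *s D v))"

definition cx_holo_fun :: "(complex^'n) set \<Rightarrow> (complex^'n \<Rightarrow> complex) \<Rightarrow> bool" where
  "cx_holo_fun S h \<longleftrightarrow>
     (\<forall>x\<in>S. \<exists>D. (h has_derivative D) (at x) \<and> (\<forall>c v. D (c *s v) = c * D v))"

definition complex_manifold ::
  "('b::{t2_space,second_countable_topology} set \<times> ('b \<Rightarrow> complex^'n)) set \<Rightarrow> bool" where
  "complex_manifold A \<longleftrightarrow>
     (\<forall>(V,\<phi>)\<in>A. open V \<and> open (\<phi> ` V) \<and> homeomorphism V (\<phi> ` V) \<phi> (inv_into V \<phi>)) \<and>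
     (\<forall>b. \<exists>(V,\<phi>)\<in>A. b \<in> V) \<and>
     (\<forall>(V,\<phi>)\<in>A. \<forall>(W,\<psi>)\<in>A. cx_holo_map (\<phi> ` (V \<inter> W)) (\<psi> \<circ> inv_into V \<phi>))"

definition holo_on :: "('b set \<times> ('b \<Rightarrow> complex^'n)) set \<Rightarrow> 'b set \<Rightarrow> ('b \<Rightarrow> complex) \<Rightarrow> bool" where
  "holo_on A W h \<longleftrightarrow> (\<forall>(V,\<phi>)\<in>A. cx_holo_fun (\<phi> ` (W \<inter> V)) (h \<circ> inv_into V \<phi>))"

text \<open>Smooth complex-valued functions on an open set U; convention: extended by 0 outside U.\<close>
definition smooth_fn :: "('b set \<times> ('b \<Rightarrow> complex^'n)) set \<Rightarrow> 'b set \<Rightarrow> ('b \<Rightarrow> complex) \<Rightarrow> bool" where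
  "smooth_fn A U r \<longleftrightarrow>
     (\<forall>b. b \<notin> U \<longrightarrow> r b = 0) \<and> (\<forall>(V,\<phi>)\<in>A. smooth_on (\<phi> ` (U \<inter> V)) (r \<circ> inv_into V \<phi>))"

section \<open>Complex vector fields (as derivations of the smooth functions on U)\<close>

type_synonym 'b vfield = "('b \<Rightarrow> complex) \<Rightarrow> ('b \<Rightarrow> complex)"

definition vfield :: "('b set \<times> ('b \<Rightarrow> complex^'n)) set \<Rightarrow> 'b set \<Rightarrow> 'b vfield \<Rightarrow> bool" where
  "vfield A U \<sigma> \<longleftrightarrow>
     (\<forall>r. \<not> smooth_fn A U r \<longrightarrow> \<sigma> r = (\<lambda>b. 0)) \<and>
     (\<forall>r. smooth_fn A U r \<longrightarrow> smooth_fn A U (\<sigma> r)) \<and>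
     (\<forall>r s. smooth_fn A U r \<and> smooth_fn A U s \<longrightarrow>
        \<sigma> (\<lambda>b. r b + s b) = (\<lambda>b. \<sigma> r b + \<sigma> s b) \<and>
        \<sigma> (\<lambda>b. r b * s b) = (\<lambda>b. r b * \<sigma> s b + s b * \<sigma> r b)) \<and>
     (\<forall>c r. smooth_fn A U r \<longrightarrow> \<sigma> (\<lambda>b. c * r b) = (\<lambda>b. c * \<sigma> r b))"

text \<open>(1,0)-fields: kill (locally) antiholomorphic functions; (0,1)-fields: kill holomorphic ones.\<close>
definition vf10 :: "('b::topological_space set \<times> ('b \<Rightarrow> complex^'n)) set \<Rightarrow> 'b set \<Rightarrow> 'b vfield \<Rightarrow> bool" where
  "vf10 A U \<sigma> \<longleftrightarrow> vfield A U \<sigma> \<and>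
     (\<forall>r b. smooth_fn A U r \<and> b \<in> U \<and>
        (\<exists>W h. open W \<and> b \<in> W \<and> W \<subseteq> U \<and> holo_on A W h \<and> (\<forall>x\<in>W. r x = cnj (h x)))
        \<longrightarrow> \<sigma> r b = 0)"

definition vf01 :: "('b::topological_space set \<times> ('b \<Rightarrow> complex^'n)) set \<Rightarrow> 'b set \<Rightarrow> 'b vfield \<Rightarrow> bool" where
  "vf01 A U \<sigma> \<longleftrightarrow> vfield A U \<sigma> \<and>
     (\<forall>r b. smooth_fn A U r \<and> b \<in> U \<and>
        (\<exists>W h. open W \<and> b \<in> W \<and> W \<subseteq> U \<and> holo_on A W h \<and> (\<forall>x\<in>W. r x = h x))
        \<longrightarrow> \<sigma> r b = 0)"

definition vconj :: "'b vfield \<Rightarrow> 'b vfield" where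
  "vconj \<sigma> = (\<lambda>r b. cnj (\<sigma> (\<lambda>x. cnj (r x)) b))"

definition vbracket :: "'b vfield \<Rightarrow> 'b vfield \<Rightarrow> 'b vfield" where
  "vbracket \<sigma> \<tau> = (\<lambda>r b. \<sigma> (\<tau> r) b - \<tau> (\<sigma> r) b)"

definition vadd :: "'b vfield \<Rightarrow> 'b vfield \<Rightarrow> 'b vfield" where
  "vadd \<sigma> \<tau> = (\<lambda>r b. \<sigma> r b + \<tau> r b)"

definition vsmul :: "('b \<Rightarrow> complex) \<Rightarrow> 'b vfield \<Rightarrow> 'b vfield" where
  "vsmul r \<sigma> = (\<lambda>s b. r b * \<sigma> s b)"

text \<open>Fibres L b are subsets of an ambient complex vector space 'v (scalar multiplication sc);
  ip b is the inner product on L b (linear in the first, conjugate linear in the second slot).\<close>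

definition fnorm :: "('b \<Rightarrow> 'v \<Rightarrow> 'v \<Rightarrow> complex) \<Rightarrow> 'b \<Rightarrow> 'v \<Rightarrow> real" where
  "fnorm ip b x = sqrt (Re (ip b x x))"

definition hilbert_field ::
  "(complex \<Rightarrow> 'v::ab_group_add \<Rightarrow> 'v) \<Rightarrow> ('b \<Rightarrow> 'v set) \<Rightarrow> ('b \<Rightarrow> 'v \<Rightarrow> 'v \<Rightarrow> complex) \<Rightarrow> bool" where
  "hilbert_field sc L ip \<longleftrightarrow> vector_space sc \<and>
     (\<forall>b. 0 \<in> L b \<and> (\<forall>x\<in>L b. \<forall>y\<in>L b. x + y \<in> L b) \<and> (\<forall>c. \<forall>x\<in>L b. sc c x \<in> L b) \<and>
        (\<forall>x\<in>L b. \<forall>y\<in>L b. \<forall>z\<in>L b. ip b (x + y) z = ip b x z + ip b y z) \<and>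
        (\<forall>c. \<forall>x\<in>L b. \<forall>y\<in>L b. ip b (sc c x) y = c * ip b x y) \<and>
        (\<forall>x\<in>L b. \<forall>y\<in>L b. ip b y x = cnj (ip b x y)) \<and>
        (\<forall>x\<in>L b. x \<noteq> 0 \<longrightarrow> Re (ip b x x) > 0) \<and>
        (\<forall>X. (\<forall>n. X n \<in> L b) \<and> (\<forall>e>0. \<exists>N. \<forall>m\<ge>N. \<forall>n\<ge>N. fnorm ip b (X m - X n) < e)
             \<longrightarrow> (\<exists>x\<in>L b. (\<lambda>n. fnorm ip b (X n - x)) \<longlonglongrightarrow> 0)))"

definition section_on :: "('b \<Rightarrow> 'v::zero set) \<Rightarrow> 'b set \<Rightarrow> ('b \<Rightarrow> 'v) \<Rightarrow> bool" where
  "section_on L U f \<longleftrightarrow> (\<forall>b\<in>U. f b \<in> L b) \<and> (\<forall>b. b \<notin> U \<longrightarrow> f b = 0)"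

definition restr :: "'b set \<Rightarrow> ('b \<Rightarrow> 'v::zero) \<Rightarrow> ('b \<Rightarrow> 'v)" where
  "restr W f = (\<lambda>b. if b \<in> W then f b else 0)"

definition fmult :: "(complex \<Rightarrow> 'v \<Rightarrow> 'v) \<Rightarrow> ('b \<Rightarrow> complex) \<Rightarrow> ('b \<Rightarrow> 'v) \<Rightarrow> ('b \<Rightarrow> 'v)" where
  "fmult sc r f = (\<lambda>b. sc (r b) (f b))"

text \<open>Smooth structure: a sheaf Sm of sections, Sm U a module over the smooth functions on U,
  whose germ values at each point are dense in the fibre.\<close>
definition smooth_structure ::
  "('b::topological_space set \<times> ('b \<Rightarrow> complex^'n)) set \<Rightarrow> (complex \<Rightarrow> 'v::ab_group_add \<Rightarrow> 'v) \<Rightarrow>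
   ('b \<Rightarrow> 'v set) \<Rightarrow> ('b \<Rightarrow> 'v \<Rightarrow> 'v \<Rightarrow> complex) \<Rightarrow> ('b set \<Rightarrow> ('b \<Rightarrow> 'v) set) \<Rightarrow> bool" where
  "smooth_structure A sc L ip Sm \<longleftrightarrow>
     (\<forall>U. open U \<longrightarrow>
        (\<forall>f\<in>Sm U. section_on L U f) \<and> (\<lambda>b. 0) \<in> Sm U \<and>
        (\<forall>f\<in>Sm U. \<forall>g\<in>Sm U. (\<lambda>b. f b + g b) \<in> Sm U) \<and>
        (\<forall>r. \<forall>f\<in>Sm U. smooth_fn A U r \<longrightarrow> fmult sc r f \<in> Sm U)) \<and>
     (\<forall>U W f. open U \<and> open W \<and> W \<subseteq> U \<and> f \<in> Sm U \<longrightarrow> restr W f \<in> Sm W) \<and>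
     (\<forall>U \<U> f. open U \<and> (\<forall>W\<in>\<U>. open W) \<and> \<Union>\<U> = U \<and> section_on L U f \<and>
        (\<forall>W\<in>\<U>. restr W f \<in> Sm W) \<longrightarrow> f \<in> Sm U) \<and>
     (\<forall>b. \<forall>x\<in>L b. \<forall>e>0. \<exists>U f. open U \<and> b \<in> U \<and> f \<in> Sm U \<and> fnorm ip b (x - f b) < e)"

definition smooth_metric ::
  "('b::topological_space set \<times> ('b \<Rightarrow> complex^'n)) set \<Rightarrow> ('b \<Rightarrow> 'v \<Rightarrow> 'v \<Rightarrow> complex) \<Rightarrow>
   ('b set \<Rightarrow> ('b \<Rightarrow> 'v) set) \<Rightarrow> bool" where
  "smooth_metric A ip Sm \<longleftrightarrow>
     (\<forall>U f g. open U \<and> f \<in> Sm U \<and> g \<in> Sm U \<longrightarrow> smooth_fn A U (\<lambda>b. ip b (f b) (g b)))"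

type_synonym ('b,'v) conn = "'b set \<Rightarrow> 'b vfield \<Rightarrow> ('b \<Rightarrow> 'v) \<Rightarrow> ('b \<Rightarrow> 'v)"

definition connection ::
  "('b::topological_space set \<times> ('b \<Rightarrow> complex^'n)) set \<Rightarrow> (complex \<Rightarrow> 'v::ab_group_add \<Rightarrow> 'v) \<Rightarrow>
   ('b set \<Rightarrow> ('b \<Rightarrow> 'v) set) \<Rightarrow> ('b,'v) conn \<Rightarrow> bool" where
  "connection A sc Sm nab \<longleftrightarrow>
     (\<forall>U. open U \<longrightarrow>
        (\<forall>\<sigma>. \<forall>f\<in>Sm U. vfield A U \<sigma> \<longrightarrow> nab U \<sigma> f \<in> Sm U) \<and>
        (\<forall>\<sigma> \<tau>. \<forall>f\<in>Sm U. vfield A U \<sigma> \<and> vfield A U \<tau> \<longrightarrow>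
            nab U (vadd \<sigma> \<tau>) f = (\<lambda>b. nab U \<sigma> f b + nab U \<tau> f b)) \<and>
        (\<forall>r \<sigma>. \<forall>f\<in>Sm U. smooth_fn A U r \<and> vfield A U \<sigma> \<longrightarrow>
            nab U (vsmul r \<sigma>) f = fmult sc r (nab U \<sigma> f)) \<and>
        (\<forall>\<sigma>. \<forall>f\<in>Sm U. \<forall>g\<in>Sm U. vfield A U \<sigma> \<longrightarrow>
            nab U \<sigma> (\<lambda>b. f b + g b) = (\<lambda>b. nab U \<sigma> f b + nab U \<sigma> g b)) \<and>
        (\<forall>\<sigma> r. \<forall>f\<in>Sm U. vfield A U \<sigma> \<and> smooth_fn A U r \<longrightarrow>
            nab U \<sigma> (fmult sc r f) = (\<lambda>b. sc (\<sigma> r b) (f b) + sc (r b) (nab U \<sigma> f b))))"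

definition metric_compatible ::
  "('b::topological_space set \<times> ('b \<Rightarrow> complex^'n)) set \<Rightarrow> ('b \<Rightarrow> 'v \<Rightarrow> 'v \<Rightarrow> complex) \<Rightarrow>
   ('b set \<Rightarrow> ('b \<Rightarrow> 'v) set) \<Rightarrow> ('b,'v) conn \<Rightarrow> bool" where
  "metric_compatible A ip Sm nab \<longleftrightarrow>
     (\<forall>U \<sigma>. \<forall>f\<in>Sm U. \<forall>g\<in>Sm U. open U \<and> vfield A U \<sigma> \<longrightarrow>
        \<sigma> (\<lambda>b. ip b (f b) (g b)) = (\<lambda>b. ip b (nab U \<sigma> f b) (g b) + ip b (f b) (nab U (vconj \<sigma>) g b)))"

definition smooth_hilbert_field ::
  "('b::topological_space set \<times> ('b \<Rightarrow> complex^'n)) set \<Rightarrow> (complex \<Rightarrow> 'v::ab_group_add \<Rightarrow> 'v) \<Rightarrow>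
   ('b \<Rightarrow> 'v set) \<Rightarrow> ('b \<Rightarrow> 'v \<Rightarrow> 'v \<Rightarrow> complex) \<Rightarrow> ('b set \<Rightarrow> ('b \<Rightarrow> 'v) set) \<Rightarrow> ('b,'v) conn \<Rightarrow> bool" where
  "smooth_hilbert_field A sc L ip Sm nab \<longleftrightarrow>
     hilbert_field sc L ip \<and> smooth_structure A sc L ip Sm \<and> smooth_metric A ip Sm \<and>
     connection A sc Sm nab \<and> metric_compatible A ip Sm nab"

definition curv :: "('b,'v::ab_group_add) conn \<Rightarrow> 'b set \<Rightarrow> 'b vfield \<Rightarrow> 'b vfield \<Rightarrow> ('b \<Rightarrow> 'v) \<Rightarrow> ('b \<Rightarrow> 'v)" where
  "curv nab U \<sigma> \<tau> f =
     (\<lambda>b. nab U \<sigma> (nab U \<tau> f) b - nab U \<tau> (nab U \<sigma> f) b - nab U (vbracket \<sigma> \<tau>) f b)"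

text \<open>dbar U sigma f stands for the value of the (0,1)-form dbar f on the (0,1)-field sigma.\<close>
definition almost_cx ::
  "('b::topological_space set \<times> ('b \<Rightarrow> complex^'n)) set \<Rightarrow> (complex \<Rightarrow> 'v::ab_group_add \<Rightarrow> 'v) \<Rightarrow>
   ('b set \<Rightarrow> ('b \<Rightarrow> 'v) set) \<Rightarrow> ('b,'v) conn \<Rightarrow> bool" where
  "almost_cx A sc Sm dbar \<longleftrightarrow>
     (\<forall>U \<sigma>. \<forall>f\<in>Sm U. open U \<and> vf01 A U \<sigma> \<longrightarrow> dbar U \<sigma> f \<in> Sm U) \<and>
     (\<forall>U \<sigma> r. \<forall>f\<in>Sm U. open U \<and> vf01 A U \<sigma> \<and> smooth_fn A U r \<longrightarrow>
        dbar U \<sigma> (fmult sc r f) = (\<lambda>b. sc (\<sigma> r b) (f b) + sc (r b) (dbar U \<sigma> f b)))"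

definition integrable_acs ::
  "('b::topological_space set \<times> ('b \<Rightarrow> complex^'n)) set \<Rightarrow>
   ('b set \<Rightarrow> ('b \<Rightarrow> 'v::ab_group_add) set) \<Rightarrow> ('b,'v) conn \<Rightarrow> bool" where
  "integrable_acs A Sm dbar \<longleftrightarrow>
     (\<forall>U \<sigma> \<tau>. \<forall>f\<in>Sm U. open U \<and> vf01 A U \<sigma> \<and> vf01 A U \<tau> \<longrightarrow>
        (\<lambda>b. dbar U \<sigma> (dbar U \<tau> f) b - dbar U \<tau> (dbar U \<sigma> f) b - dbar U (vbracket \<sigma> \<tau>) f b)
          = (\<lambda>b. 0))"

definition BLS_field ::
  "('b::topological_space set \<times> ('b \<Rightarrow> complex^'n)) set \<Rightarrow> (complex \<Rightarrow> 'v::ab_group_add \<Rightarrow> 'v) \<Rightarrow>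
   ('b \<Rightarrow> 'v set) \<Rightarrow> ('b \<Rightarrow> 'v \<Rightarrow> 'v \<Rightarrow> complex) \<Rightarrow> ('b set \<Rightarrow> ('b \<Rightarrow> 'v) set) \<Rightarrow>
   ('b,'v) conn \<Rightarrow> ('b,'v) conn \<Rightarrow> bool" where
  "BLS_field A sc L ip Sm nab dbar \<longleftrightarrow>
     smooth_hilbert_field A sc L ip Sm nab \<and> almost_cx A sc Sm dbar \<and>
     (\<forall>U \<sigma>. \<forall>f\<in>Sm U. open U \<and> vf01 A U \<sigma> \<longrightarrow> nab U \<sigma> f = dbar U \<sigma> f)"

definition SmSub :: "('b set \<Rightarrow> ('b \<Rightarrow> 'v) set) \<Rightarrow> ('b \<Rightarrow> 'v set) \<Rightarrow> 'b set \<Rightarrow> ('b \<Rightarrow> 'v) set" where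
  "SmSub Sm H U = {f \<in> Sm U. \<forall>b\<in>U. f b \<in> H b}"

definition proj :: "('b \<Rightarrow> 'v \<Rightarrow> 'v \<Rightarrow> complex) \<Rightarrow> ('b \<Rightarrow> 'v::ab_group_add set) \<Rightarrow> 'b \<Rightarrow> 'v \<Rightarrow> 'v" where
  "proj ip H b x = (THE y. y \<in> H b \<and> (\<forall>z\<in>H b. ip b (x - y) z = 0))"

definition proj_perp :: "('b \<Rightarrow> 'v \<Rightarrow> 'v \<Rightarrow> complex) \<Rightarrow> ('b \<Rightarrow> 'v::ab_group_add set) \<Rightarrow> 'b \<Rightarrow> 'v \<Rightarrow> 'v" where
  "proj_perp ip H b x = x - proj ip H b x"

definition BLS_subfield ::
  "('b::topological_space set \<times> ('b \<Rightarrow> complex^'n)) set \<Rightarrow> (complex \<Rightarrow> 'v::ab_group_add \<Rightarrow> 'v) \<Rightarrow>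
   ('b \<Rightarrow> 'v set) \<Rightarrow> ('b \<Rightarrow> 'v \<Rightarrow> 'v \<Rightarrow> complex) \<Rightarrow> ('b set \<Rightarrow> ('b \<Rightarrow> 'v) set) \<Rightarrow>
   ('b,'v) conn \<Rightarrow> ('b \<Rightarrow> 'v set) \<Rightarrow> bool" where
  "BLS_subfield A sc L ip Sm dbar H \<longleftrightarrow>
     (\<forall>b. H b \<subseteq> L b \<and> 0 \<in> H b \<and> (\<forall>x\<in>H b. \<forall>y\<in>H b. x + y \<in> H b) \<and>
        (\<forall>c. \<forall>x\<in>H b. sc c x \<in> H b) \<and>
        (\<forall>X x. (\<forall>n. X n \<in> H b) \<and> x \<in> L b \<and> (\<lambda>n. fnorm ip b (X n - x)) \<longlonglongrightarrow> 0 \<longrightarrow> x \<in> H b)) \<and>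
     (\<forall>b. \<forall>x\<in>H b. \<forall>e>0. \<exists>U f. open U \<and> b \<in> U \<and> f \<in> SmSub Sm H U \<and> fnorm ip b (x - f b) < e) \<and>
     (\<forall>U \<sigma>. \<forall>f\<in>SmSub Sm H U. open U \<and> vf01 A U \<sigma> \<longrightarrow> dbar U \<sigma> f \<in> SmSub Sm H U) \<and>
     (\<forall>U. \<forall>f\<in>Sm U. open U \<longrightarrow> (\<lambda>b. proj ip H b (f b)) \<in> Sm U)"

definition induced_conn :: "('b \<Rightarrow> 'v \<Rightarrow> 'v \<Rightarrow> complex) \<Rightarrow> ('b \<Rightarrow> 'v::ab_group_add set) \<Rightarrow> ('b,'v) conn \<Rightarrow> ('b,'v) conn" where
  "induced_conn ip H nab = (\<lambda>U \<sigma> f b. proj ip H b (nab U \<sigma> f b))"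

end

theory Submission
  imports Defs
begin

(* The induced connection nabla^H = P nabla^L is metric, and along a (0,1)-field it is dbar: for f in H
   the section nabla^L_tau f = dbar f already lies in H, so P does not change it.  Hence Theta^H on two
   (0,1)-fields is the integrability tensor of dbar^H and vanishes, and since nabla^H is metric,
   Theta^H on two (1,0)-fields is minus the adjoint of that and vanishes too.  In the mixed component
   Theta^H_{sigma, tau-bar} only the middle term differs from Theta^L: nabla_{tau-bar} nabla_sigma f is
   replaced by nabla_{tau-bar} (P nabla_sigma f).  Pairing with g in H and differentiating
   (h, g) = (P h, g) along tau-bar turns the difference into (P^perp nabla_sigma f, P^perp nabla_tau g).
   The projection P, defined fibrewise by a description, exists by the usual minimisation argument in
   the complete fibres. *)

section \<open>Orthogonal projection onto a closed subspace\<close>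

locale pre_hilbert_fibre = vector_space sc
  for sc :: "complex \<Rightarrow> 'v::ab_group_add \<Rightarrow> 'v" +
  fixes V :: "'v set" and ip :: "'v \<Rightarrow> 'v \<Rightarrow> complex"
  assumes zero_mem: "0 \<in> V"
    and add_mem: "x \<in> V \<Longrightarrow> y \<in> V \<Longrightarrow> x + y \<in> V"
    and scale_mem: "x \<in> V \<Longrightarrow> sc c x \<in> V"
    and ip_add_left: "x \<in> V \<Longrightarrow> y \<in> V \<Longrightarrow> z \<in> V \<Longrightarrow> ip (x + y) z = ip x z + ip y z"
    and ip_scale_left: "x \<in> V \<Longrightarrow> y \<in> V \<Longrightarrow> ip (sc c x) y = c * ip x y"
    and ip_commute: "x \<in> V \<Longrightarrow> y \<in> V \<Longrightarrow> ip y x = cnj (ip x y)"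
    and ip_self_pos: "x \<in> V \<Longrightarrow> x \<noteq> 0 \<Longrightarrow> Re (ip x x) > 0"
begin

lemma minus_mem: "x \<in> V \<Longrightarrow> - x \<in> V"
  using scale_mem[of x "-1"] by simp

lemma diff_mem: "x \<in> V \<Longrightarrow> y \<in> V \<Longrightarrow> x - y \<in> V"
  using add_mem[of x "- y"] minus_mem[of y] by simp

lemma ip_zero_left: "z \<in> V \<Longrightarrow> ip 0 z = 0"
  using ip_add_left[of 0 0 z] zero_mem by simp

lemma ip_zero_right: "z \<in> V \<Longrightarrow> ip z 0 = 0"
  using ip_commute[of 0 z] ip_zero_left[of z] zero_mem by simp

lemma ip_diff_left: "x \<in> V \<Longrightarrow> y \<in> V \<Longrightarrow> z \<in> V \<Longrightarrow> ip (x - y) z = ip x z - ip y z"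
  using ip_add_left[of x "- y" z] ip_scale_left[of y z "-1"] minus_mem[of y] by simp

lemma ip_add_right: "x \<in> V \<Longrightarrow> y \<in> V \<Longrightarrow> z \<in> V \<Longrightarrow> ip z (x + y) = ip z x + ip z y"
  by (metis ip_add_left ip_commute add_mem complex_cnj_add)

lemma ip_diff_right: "x \<in> V \<Longrightarrow> y \<in> V \<Longrightarrow> z \<in> V \<Longrightarrow> ip z (x - y) = ip z x - ip z y"
  by (metis ip_diff_left ip_commute diff_mem complex_cnj_diff)

lemma ip_scale_right: "x \<in> V \<Longrightarrow> z \<in> V \<Longrightarrow> ip z (sc c x) = cnj c * ip z x"
  by (metis ip_scale_left ip_commute scale_mem complex_cnj_mult complex_cnj_cnj)

definition sqnorm :: "'v \<Rightarrow> real" where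
  "sqnorm x = Re (ip x x)"

lemma sqnorm_nonneg: "x \<in> V \<Longrightarrow> sqnorm x \<ge> 0"
  using ip_self_pos[of x] ip_zero_left zero_mem unfolding sqnorm_def by (cases "x = 0") auto

lemma sqnorm_eq_0: "x \<in> V \<Longrightarrow> sqnorm x = 0 \<Longrightarrow> x = 0"
  using ip_self_pos[of x] unfolding sqnorm_def by force

lemma ip_self_eq_0: "x \<in> V \<Longrightarrow> ip x x = 0 \<Longrightarrow> x = 0"
  using sqnorm_eq_0 unfolding sqnorm_def by simp

lemma Re_ip_commute: "x \<in> V \<Longrightarrow> y \<in> V \<Longrightarrow> Re (ip y x) = Re (ip x y)"
  using ip_commute[of x y] by simp

lemma sqnorm_add: "x \<in> V \<Longrightarrow> y \<in> V \<Longrightarrow> sqnorm (x + y) = sqnorm x + sqnorm y + 2 * Re (ip x y)"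
  unfolding sqnorm_def
  using ip_add_left[of x y "x + y"] ip_add_right[of x y x] ip_add_right[of x y y] add_mem[of x y]
    Re_ip_commute[of x y]
  by simp

lemma sqnorm_diff: "x \<in> V \<Longrightarrow> y \<in> V \<Longrightarrow> sqnorm (x - y) = sqnorm x + sqnorm y - 2 * Re (ip x y)"
  unfolding sqnorm_def
  using ip_diff_left[of x y "x - y"] ip_diff_right[of x y x] ip_diff_right[of x y y] diff_mem[of x y]
    Re_ip_commute[of x y]
  by simp

lemma sqnorm_scale: "x \<in> V \<Longrightarrow> sqnorm (sc (complex_of_real t) x) = t\<^sup>2 * sqnorm x"
  unfolding sqnorm_def using ip_scale_left ip_scale_right scale_mem
  by (simp add: power2_eq_square)

lemma Re_ip_scale_right: "x \<in> V \<Longrightarrow> z \<in> V \<Longrightarrow> Re (ip z (sc (complex_of_real t) x)) = t * Re (ip z x)"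
  using ip_scale_right[of x z t] by simp

lemma Cauchy_Schwarz: assumes "x \<in> V" "y \<in> V" shows "(Re (ip x y))\<^sup>2 \<le> sqnorm x * sqnorm y"
proof (cases "sqnorm y = 0")
  case True
  then have "y = 0" using sqnorm_eq_0 assms by blast
  then show ?thesis using ip_zero_right sqnorm_nonneg assms by simp
next
  case False
  then have pos: "sqnorm y > 0" using sqnorm_nonneg assms by (simp add: order_less_le)
  define r where "r = Re (ip x y)"
  define t where "t = r / sqnorm y"
  have "0 \<le> sqnorm (x - sc (complex_of_real t) y)" using sqnorm_nonneg diff_mem scale_mem assms by blast
  also have "\<dots> = sqnorm x + t\<^sup>2 * sqnorm y - 2 * t * r"
    using sqnorm_diff sqnorm_scale Re_ip_scale_right scale_mem assms by (simp add: r_def)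
  also have "\<dots> = sqnorm x - r\<^sup>2 / sqnorm y" using pos by (simp add: t_def field_simps power2_eq_square)
  finally show ?thesis using pos by (simp add: r_def field_simps)
qed

lemma sqrt_sqnorm_triangle:
  assumes "x \<in> V" "y \<in> V" shows "sqrt (sqnorm (x + y)) \<le> sqrt (sqnorm x) + sqrt (sqnorm y)"
proof -
  have "Re (ip x y) \<le> sqrt (sqnorm x) * sqrt (sqnorm y)"
    using Cauchy_Schwarz[OF assms] sqnorm_nonneg assms
    by (metis real_le_rsqrt real_sqrt_mult)
  then have "sqnorm (x + y) \<le> (sqrt (sqnorm x) + sqrt (sqnorm y))\<^sup>2"
    using sqnorm_add[OF assms] sqnorm_nonneg assms by (simp add: power2_eq_square algebra_simps)
  then show ?thesis using sqnorm_nonneg assms real_le_lsqrt by auto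
qed

end

locale hilbert_fibre = pre_hilbert_fibre +
  assumes complete: "(\<forall>n. X n \<in> V) \<Longrightarrow>
      (\<forall>e>0. \<exists>N. \<forall>m\<ge>N. \<forall>n\<ge>N. sqrt (Re (ip (X m - X n) (X m - X n))) < e) \<Longrightarrow>
      \<exists>x\<in>V. (\<lambda>n. sqrt (Re (ip (X n - x) (X n - x)))) \<longlonglongrightarrow> 0"

lemma eq_0_if_linear_le_quadratic:
  fixes a c :: real
  assumes "c \<ge> 0" "\<And>t. 2 * t * a \<le> t\<^sup>2 * c" shows "a = 0"
proof -
  define t where "t = a / (c + 1)"
  have a: "a = t * (c + 1)" using assms(1) by (simp add: t_def)
  have "2 * t * (t * (c + 1)) \<le> t\<^sup>2 * c" using assms(2)[of t] a by simp
  then have "t\<^sup>2 * (c + 2) \<le> 0" by (simp add: algebra_simps power2_eq_square)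
  with assms(1) have "t = 0" by (simp add: mult_le_0_iff)
  then show ?thesis using a by simp
qed

locale closed_subspace = hilbert_fibre sc V ip
  for sc :: "complex \<Rightarrow> 'v::ab_group_add \<Rightarrow> 'v" and V ip +
  fixes H :: "'v set"
  assumes subset: "H \<subseteq> V" and zero_mem_H: "0 \<in> H"
    and add_mem_H: "x \<in> H \<Longrightarrow> y \<in> H \<Longrightarrow> x + y \<in> H"
    and scale_mem_H: "x \<in> H \<Longrightarrow> sc c x \<in> H"
    and closed: "(\<forall>n. X n \<in> H) \<Longrightarrow> x \<in> V \<Longrightarrow>
      (\<lambda>n. sqrt (Re (ip (X n - x) (X n - x)))) \<longlonglongrightarrow> 0 \<Longrightarrow> x \<in> H"
begin

lemma mem_V: "x \<in> H \<Longrightarrow> x \<in> V"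
  using subset by auto

lemma diff_mem_H: "x \<in> H \<Longrightarrow> y \<in> H \<Longrightarrow> x - y \<in> H"
  using add_mem_H[of x "- y"] scale_mem_H[of y "-1"] by simp

definition dist_sq :: "'v \<Rightarrow> real" where
  "dist_sq x = Inf ((\<lambda>h. sqnorm (x - h)) ` H)"

lemma dist_sq_le: assumes "x \<in> V" "h \<in> H" shows "dist_sq x \<le> sqnorm (x - h)"
proof -
  have "bdd_below ((\<lambda>h. sqnorm (x - h)) ` H)"
    by (rule bdd_belowI2[where m = 0]) (use sqnorm_nonneg diff_mem mem_V assms(1) in blast)
  then show ?thesis unfolding dist_sq_def by (rule cINF_lower) (rule assms(2))
qed

lemma minimizing_sequence_exists:
  "\<exists>hs. \<forall>n. hs n \<in> H \<and> sqnorm (x - hs n) < dist_sq x + inverse (real (Suc n))"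
proof -
  have "\<exists>h\<in>H. sqnorm (x - h) < dist_sq x + inverse (real (Suc n))" for n
    using cInf_lessD[of "(\<lambda>h. sqnorm (x - h)) ` H" "dist_sq x + inverse (real (Suc n))"] zero_mem_H
    unfolding dist_sq_def by auto
  then show ?thesis by metis
qed

lemma parallelogram_minimizing:
  assumes x: "x \<in> V" and hk: "h \<in> H" "k \<in> H"
  shows "sqnorm (h - k) + 4 * dist_sq x \<le> 2 * sqnorm (x - h) + 2 * sqnorm (x - k)"
proof -
  define mid where "mid = sc (1/2) (h + k)"
  have mid: "mid \<in> H" using hk by (simp add: mid_def add_mem_H scale_mem_H)
  have "(x - k) + (x - h) = sc (complex_of_real 2) (x - mid)"
    using scale_left_distrib[of 1 1 x] by (simp add: mid_def scale_right_diff_distrib algebra_simps)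
  then have "sqnorm ((x - k) + (x - h)) = 4 * sqnorm (x - mid)"
    using sqnorm_scale[of "x - mid" 2] diff_mem[OF x mem_V[OF mid]] by simp
  moreover have "dist_sq x \<le> sqnorm (x - mid)" using dist_sq_le[OF x mid] .
  moreover have "sqnorm ((x - k) - (x - h)) + sqnorm ((x - k) + (x - h)) = 2 * sqnorm (x - k) + 2 * sqnorm (x - h)"
    using sqnorm_add[of "x - k" "x - h"] sqnorm_diff[of "x - k" "x - h"] diff_mem x mem_V hk by force
  moreover have "(x - k) - (x - h) = h - k" by (simp add: algebra_simps)
  ultimately show ?thesis by simp
qed

lemma minimizing_sequence_Cauchy:
  assumes x: "x \<in> V" and hs: "\<And>n. hs n \<in> H" "\<And>n. sqnorm (x - hs n) < dist_sq x + inverse (real (Suc n))"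
  shows "\<forall>e>0. \<exists>N. \<forall>m\<ge>N. \<forall>n\<ge>N. sqrt (Re (ip (hs m - hs n) (hs m - hs n))) < e"
proof (intro allI impI)
  fix e :: real assume e: "e > 0"
  obtain N where N: "inverse (real (Suc N)) < e\<^sup>2 / 4" using reals_Archimedean[of "e\<^sup>2 / 4"] e by auto
  have "sqnorm (hs m - hs n) < e\<^sup>2" if "N \<le> m" "N \<le> n" for m n
  proof -
    have "inverse (real (Suc m)) \<le> inverse (real (Suc N))" "inverse (real (Suc n)) \<le> inverse (real (Suc N))"
      using that by (simp_all add: le_imp_inverse_le)
    then show ?thesis
      using parallelogram_minimizing[OF x hs(1)[of m] hs(1)[of n]] hs(2)[of m] hs(2)[of n] N by linarith
  qed
  then show "\<exists>N. \<forall>m\<ge>N. \<forall>n\<ge>N. sqrt (Re (ip (hs m - hs n) (hs m - hs n))) < e"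
    using e real_sqrt_less_mono[of _ "e\<^sup>2"] unfolding sqnorm_def by (metis real_sqrt_abs abs_of_pos)
qed

lemma minimizer_exists:
  assumes x: "x \<in> V" shows "\<exists>y\<in>H. \<forall>h\<in>H. sqnorm (x - y) \<le> sqnorm (x - h)"
proof -
  obtain hs where hs: "\<And>n. hs n \<in> H" "\<And>n. sqnorm (x - hs n) < dist_sq x + inverse (real (Suc n))"
    using minimizing_sequence_exists[of x] by blast
  have hsV: "hs n \<in> V" for n using hs(1) mem_V by blast
  obtain y where y: "y \<in> V" and lim: "(\<lambda>n. sqrt (Re (ip (hs n - y) (hs n - y)))) \<longlonglongrightarrow> 0"
    using complete[of hs] hsV minimizing_sequence_Cauchy[OF x hs] by blast
  have "sqrt (sqnorm (x - y)) \<le> sqrt (dist_sq x + inverse (real (Suc n))) + sqrt (sqnorm (hs n - y))" for n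
  proof -
    have "sqrt (sqnorm (x - y)) \<le> sqrt (sqnorm (x - hs n)) + sqrt (sqnorm (hs n - y))"
      using sqrt_sqnorm_triangle[of "x - hs n" "hs n - y"] diff_mem x y hsV by simp
    moreover have "sqrt (sqnorm (x - hs n)) \<le> sqrt (dist_sq x + inverse (real (Suc n)))"
      using hs(2)[of n] by simp
    ultimately show ?thesis by linarith
  qed
  moreover have "(\<lambda>n. sqrt (dist_sq x + inverse (real (Suc n))) + sqrt (sqnorm (hs n - y))) \<longlonglongrightarrow> sqrt (dist_sq x) + 0"
    unfolding sqnorm_def by (intro tendsto_add tendsto_real_sqrt LIMSEQ_inverse_real_of_nat_add lim)
  ultimately have "sqrt (sqnorm (x - y)) \<le> sqrt (dist_sq x)"
    by (intro LIMSEQ_le_const[where X = "\<lambda>n. sqrt (dist_sq x + inverse (real (Suc n))) + sqrt (sqnorm (hs n - y))"]) auto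
  then have "\<forall>h\<in>H. sqnorm (x - y) \<le> sqnorm (x - h)"
    using dist_sq_le[OF x] by (fastforce simp: real_sqrt_le_iff)
  moreover have "y \<in> H" using closed[of hs y] hs(1) y lim by blast
  ultimately show ?thesis by blast
qed

lemma orthogonal_if_minimizer:
  assumes x: "x \<in> V" and y: "y \<in> H" and min: "\<And>h. h \<in> H \<Longrightarrow> sqnorm (x - y) \<le> sqnorm (x - h)"
    and z: "z \<in> H"
  shows "ip (x - y) z = 0"
proof -
  define w where "w = x - y"
  have w: "w \<in> V" using diff_mem x mem_V[OF y] w_def by auto
  have Re_0: "Re (ip w u) = 0" if u: "u \<in> H" for u
  proof (rule eq_0_if_linear_le_quadratic)
    fix t
    have "y + sc (complex_of_real t) u \<in> H" using add_mem_H scale_mem_H y u by auto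
    then have "sqnorm w \<le> sqnorm (w - sc (complex_of_real t) u)"
      using min[of "y + sc (complex_of_real t) u"] by (simp add: w_def algebra_simps)
    also have "\<dots> = sqnorm w + t\<^sup>2 * sqnorm u - 2 * (t * Re (ip w u))"
      using sqnorm_diff sqnorm_scale Re_ip_scale_right scale_mem w mem_V[OF u] by simp
    finally show "2 * t * Re (ip w u) \<le> t\<^sup>2 * sqnorm u" by simp
  qed (use sqnorm_nonneg mem_V u in auto)
  have "Im (ip w z) = Re (ip w (sc \<i> z))" using ip_scale_right[OF mem_V[OF z] w, of \<i>] by simp
  then have "Im (ip w z) = 0" using Re_0 scale_mem_H z by auto
  with Re_0[OF z] show ?thesis by (simp add: w_def complex_eq_iff)
qed

definition orth_proj :: "'v \<Rightarrow> 'v" where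
  "orth_proj x = (THE y. y \<in> H \<and> (\<forall>z\<in>H. ip (x - y) z = 0))"

lemma orth_proj_unique:
  assumes x: "x \<in> V" and "y \<in> H" "\<forall>z\<in>H. ip (x - y) z = 0" "y' \<in> H" "\<forall>z\<in>H. ip (x - y') z = 0"
  shows "y = y'"
proof -
  have d: "y' - y \<in> H" using diff_mem_H assms by auto
  have "ip (y' - y) (y' - y) = ip (x - y) (y' - y) - ip (x - y') (y' - y)"
    using ip_diff_left[of "x - y" "x - y'" "y' - y"] diff_mem x mem_V assms d by simp
  also have "\<dots> = 0" using assms d by simp
  finally have "y' - y = 0" using ip_self_eq_0 mem_V[OF d] by blast
  then show ?thesis by simp
qed

lemma orth_proj_spec: assumes "x \<in> V" shows "orth_proj x \<in> H" "\<forall>z\<in>H. ip (x - orth_proj x) z = 0"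
proof -
  have "\<exists>!y. y \<in> H \<and> (\<forall>z\<in>H. ip (x - y) z = 0)"
    using minimizer_exists[OF assms] orthogonal_if_minimizer[OF assms] orth_proj_unique[OF assms] by metis
  from theI'[OF this] show "orth_proj x \<in> H" "\<forall>z\<in>H. ip (x - orth_proj x) z = 0"
    unfolding orth_proj_def by auto
qed

lemma orth_proj_id: "x \<in> H \<Longrightarrow> orth_proj x = x"
  using orth_proj_unique[OF mem_V orth_proj_spec[OF mem_V]] ip_zero_left mem_V by auto

lemma orth_proj_mem_V: "x \<in> V \<Longrightarrow> orth_proj x \<in> V"
  using orth_proj_spec mem_V by auto

lemma ip_orth_proj_left: "x \<in> V \<Longrightarrow> z \<in> H \<Longrightarrow> ip (orth_proj x) z = ip x z"
  using orth_proj_spec(2) ip_diff_left orth_proj_mem_V mem_V by fastforce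

lemma ip_orth_proj_right: "x \<in> H \<Longrightarrow> y \<in> V \<Longrightarrow> ip x (orth_proj y) = ip x y"
  using ip_orth_proj_left ip_commute orth_proj_mem_V mem_V by metis

lemma ip_orth_complement:
  "x \<in> V \<Longrightarrow> y \<in> V \<Longrightarrow> ip (x - orth_proj x) y = ip (x - orth_proj x) (y - orth_proj y)"
  using orth_proj_spec ip_diff_right diff_mem orth_proj_mem_V by simp

end

section \<open>Smooth functions on the manifold\<close>

lemma Ck_on_Suc_imp: "Ck_on (Suc k) S f \<Longrightarrow> Ck_on k S f"
proof (induction k arbitrary: f)
  case 0
  then show ?case
    by (auto intro!: continuous_at_imp_continuous_on differentiable_imp_continuous_within)
qed auto

lemma Ck_on_cong: "open S \<Longrightarrow> Ck_on k S f \<Longrightarrow> (\<And>x. x \<in> S \<Longrightarrow> f x = g x) \<Longrightarrow> Ck_on k S g"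
proof (induction k arbitrary: f g)
  case 0
  then show ?case using continuous_on_cong by force
next
  case (Suc k)
  have Dg: "(g has_derivative frechet_derivative f (at x)) (at x)" if "x \<in> S" for x
    using has_derivative_transform_within_open[of f _ x UNIV S g] Suc.prems that
    by (auto simp: frechet_derivative_works)
  have "g differentiable (at x)" if "x \<in> S" for x using Dg[OF that] by (auto simp: differentiable_def)
  moreover have "Ck_on k S (\<lambda>x. frechet_derivative g (at x) v)" for v
    using Suc.IH[of "\<lambda>x. frechet_derivative f (at x) v"] Suc.prems frechet_derivative_at[OF Dg, symmetric] by auto
  ultimately show ?case by simp
qed

lemma Ck_on_Suc_has_derivative:
  "Ck_on (Suc k) S f \<Longrightarrow> x \<in> S \<Longrightarrow> (f has_derivative frechet_derivative f (at x)) (at x)"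
  by (simp add: frechet_derivative_works[symmetric])

lemma Ck_on_add:
  fixes f g :: "'a::real_normed_vector \<Rightarrow> 'c::real_normed_vector"
  shows "open S \<Longrightarrow> Ck_on k S f \<Longrightarrow> Ck_on k S g \<Longrightarrow> Ck_on k S (\<lambda>x. f x + g x)"
proof (induction k arbitrary: f g)
  case (Suc k)
  have D: "frechet_derivative (\<lambda>x. f x + g x) (at x) v =
      frechet_derivative f (at x) v + frechet_derivative g (at x) v" if "x \<in> S" for x v
    using frechet_derivative_at[OF has_derivative_add[OF
        Ck_on_Suc_has_derivative[OF Suc.prems(2) that] Ck_on_Suc_has_derivative[OF Suc.prems(3) that]], symmetric]
    by simp
  have "Ck_on k S (\<lambda>x. frechet_derivative f (at x) v + frechet_derivative g (at x) v)" for v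
    using Suc by simp
  then have "Ck_on k S (\<lambda>x. frechet_derivative (\<lambda>x. f x + g x) (at x) v)" for v
    by (rule Ck_on_cong[OF \<open>open S\<close>]) (simp add: D)
  moreover have "(\<lambda>x. f x + g x) differentiable (at x)" if "x \<in> S" for x
    using Suc.prems that by (simp add: differentiable_add)
  ultimately show ?case by simp
qed (simp add: continuous_on_add)

lemma Ck_on_bounded_linear:
  assumes "bounded_linear T"
  shows "open S \<Longrightarrow> Ck_on k S f \<Longrightarrow> Ck_on k S (\<lambda>x. T (f x))"
proof (induction k arbitrary: f)
  case (Suc k)
  have D: "frechet_derivative (\<lambda>x. T (f x)) (at x) v = T (frechet_derivative f (at x) v)"
    if "x \<in> S" for x v
    using frechet_derivative_at[OF bounded_linear.has_derivative[OF assms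
        Ck_on_Suc_has_derivative[OF Suc.prems(2) that]], symmetric]
    by simp
  have "Ck_on k S (\<lambda>x. T (frechet_derivative f (at x) v))" for v
    using Suc by simp
  then have "Ck_on k S (\<lambda>x. frechet_derivative (\<lambda>x. T (f x)) (at x) v)" for v
    by (rule Ck_on_cong[OF \<open>open S\<close>]) (simp add: D)
  moreover have "(\<lambda>x. T (f x)) differentiable (at x)" if "x \<in> S" for x
    using bounded_linear.has_derivative[OF assms Ck_on_Suc_has_derivative[OF Suc.prems(2) that]]
    by (auto simp: differentiable_def)
  ultimately show ?case by simp
qed (simp add: bounded_linear.continuous_on[OF assms])

lemma Ck_on_bounded_bilinear:
  assumes "bounded_bilinear bop"
  shows "open S \<Longrightarrow> Ck_on k S f \<Longrightarrow> Ck_on k S g \<Longrightarrow> Ck_on k S (\<lambda>x. bop (f x) (g x))"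
proof (induction k arbitrary: f g)
  case (Suc k)
  have Df: "(f has_derivative frechet_derivative f (at x)) (at x)"
    and Dg: "(g has_derivative frechet_derivative g (at x)) (at x)" if "x \<in> S" for x
    using Ck_on_Suc_has_derivative Suc.prems that by blast+
  have D: "frechet_derivative (\<lambda>x. bop (f x) (g x)) (at x) v =
      bop (f x) (frechet_derivative g (at x) v) + bop (frechet_derivative f (at x) v) (g x)"
    if "x \<in> S" for x v
    using frechet_derivative_at[OF bounded_bilinear.FDERIV[OF assms Df[OF that] Dg[OF that]], symmetric] by simp
  have "Ck_on k S f" "Ck_on k S g"
    using Suc.prems Ck_on_Suc_imp by blast+
  then have "Ck_on k S (\<lambda>x. bop (f x) (frechet_derivative g (at x) v) +
      bop (frechet_derivative f (at x) v) (g x))" for v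
    using Suc by (intro Ck_on_add Suc.IH) simp_all
  then have "Ck_on k S (\<lambda>x. frechet_derivative (\<lambda>x. bop (f x) (g x)) (at x) v)" for v
    by (rule Ck_on_cong[OF \<open>open S\<close>]) (simp add: D)
  moreover have "(\<lambda>x. bop (f x) (g x)) differentiable (at x)" if "x \<in> S" for x
    using bounded_bilinear.FDERIV[OF assms Df[OF that] Dg[OF that]] by (auto simp: differentiable_def)
  ultimately show ?case by simp
qed (simp add: bounded_bilinear.continuous_on[OF assms])

lemma smooth_on_mult:
  "open S \<Longrightarrow> smooth_on S f \<Longrightarrow> smooth_on S g \<Longrightarrow> smooth_on S (\<lambda>x. f x * (g x :: complex))"
  unfolding smooth_on_def using Ck_on_bounded_bilinear[OF bounded_bilinear_mult] by blast

lemma smooth_on_diff: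
  "open S \<Longrightarrow> smooth_on S f \<Longrightarrow> smooth_on S g \<Longrightarrow> smooth_on S (\<lambda>x. f x - (g x :: complex))"
  unfolding smooth_on_def diff_conv_add_uminus
  using Ck_on_add Ck_on_bounded_linear[OF bounded_linear_minus[OF bounded_linear_ident]] by blast

lemma smooth_on_cnj: "open S \<Longrightarrow> smooth_on S f \<Longrightarrow> smooth_on S (\<lambda>x. cnj (f x))"
  unfolding smooth_on_def using Ck_on_bounded_linear[OF bounded_linear_cnj] by blast

lemma open_chart_image:
  assumes "complex_manifold A" "(V, \<phi>) \<in> A" "open U"
  shows "open (\<phi> ` (U \<inter> V))"
proof -
  have chart: "open V" "open (\<phi> ` V)" "homeomorphism V (\<phi> ` V) \<phi> (inv_into V \<phi>)"
    using assms unfolding complex_manifold_def by fast+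
  have "openin (top_of_set (\<phi> ` V)) (\<phi> ` (U \<inter> V))"
    by (rule homeomorphism_imp_open_map[OF chart(3)])
       (use assms in \<open>auto simp: openin_open intro!: exI[of _ U]\<close>)
  then show ?thesis using chart(2) openin_open_trans by blast
qed

lemma smooth_fn_binop:
  fixes A :: "('b::{t2_space,second_countable_topology} set \<times> ('b \<Rightarrow> complex^'n)) set"
  assumes "complex_manifold A" "open U" "smooth_fn A U r" "smooth_fn A U s" "F 0 0 = 0"
    and F: "\<And>S (f :: complex^'n \<Rightarrow> complex) g. open S \<Longrightarrow> smooth_on S f \<Longrightarrow> smooth_on S g \<Longrightarrow> smooth_on S (\<lambda>x. F (f x) (g x))"
  shows "smooth_fn A U (\<lambda>b. F (r b) (s b))"
  unfolding smooth_fn_def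
proof (intro conjI allI impI ballI)
  show "b \<notin> U \<Longrightarrow> F (r b) (s b) = 0" for b
    using assms(3,4,5) unfolding smooth_fn_def by auto
  fix p assume "p \<in> A"
  moreover obtain V \<phi> where p: "p = (V, \<phi>)" by fastforce
  ultimately have chart: "(V, \<phi>) \<in> A" by simp
  have "smooth_on (\<phi> ` (U \<inter> V)) (r \<circ> inv_into V \<phi>)" "smooth_on (\<phi> ` (U \<inter> V)) (s \<circ> inv_into V \<phi>)"
    using assms(3,4) chart unfolding smooth_fn_def by auto
  then have "smooth_on (\<phi> ` (U \<inter> V)) (\<lambda>x. F ((r \<circ> inv_into V \<phi>) x) ((s \<circ> inv_into V \<phi>) x))"
    by (rule F[OF open_chart_image[OF assms(1) chart assms(2)]])
  then show "case p of (V, \<phi>) \<Rightarrow> smooth_on (\<phi> ` (U \<inter> V)) ((\<lambda>b. F (r b) (s b)) \<circ> inv_into V \<phi>)"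
    using p by (simp add: o_def)
qed

lemma smooth_fn_mult:
  assumes "complex_manifold A" "open U" "smooth_fn A U r" "smooth_fn A U s"
  shows "smooth_fn A U (\<lambda>b. r b * s b)"
  by (rule smooth_fn_binop[OF assms]) (simp_all add: smooth_on_mult)

lemma smooth_fn_diff:
  assumes "complex_manifold A" "open U" "smooth_fn A U r" "smooth_fn A U s"
  shows "smooth_fn A U (\<lambda>b. r b - s b)"
  by (rule smooth_fn_binop[OF assms]) (simp_all add: smooth_on_diff)

lemma smooth_fn_cnj_iff:
  assumes "complex_manifold A" "open U"
  shows "smooth_fn A U (\<lambda>b. cnj (r b)) \<longleftrightarrow> smooth_fn A U r"
proof -
  have "smooth_fn A U (\<lambda>b. cnj (r b))" if "smooth_fn A U r" for r
    by (rule smooth_fn_binop[where F = "\<lambda>a _. cnj a", OF assms that that]) (simp_all add: smooth_on_cnj)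
  from this[of r] this[of "\<lambda>b. cnj (r b)"] show ?thesis by auto
qed

section \<open>Complex vector fields\<close>

lemma vfield_smooth: "vfield A U \<sigma> \<Longrightarrow> smooth_fn A U r \<Longrightarrow> smooth_fn A U (\<sigma> r)"
  and vfield_nonsmooth: "vfield A U \<sigma> \<Longrightarrow> \<not> smooth_fn A U r \<Longrightarrow> \<sigma> r = (\<lambda>b. 0)"
  and vfield_add: "vfield A U \<sigma> \<Longrightarrow> smooth_fn A U r \<Longrightarrow> smooth_fn A U s \<Longrightarrow>
    \<sigma> (\<lambda>b. r b + s b) = (\<lambda>b. \<sigma> r b + \<sigma> s b)"
  and vfield_mult: "vfield A U \<sigma> \<Longrightarrow> smooth_fn A U r \<Longrightarrow> smooth_fn A U s \<Longrightarrow>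
    \<sigma> (\<lambda>b. r b * s b) = (\<lambda>b. r b * \<sigma> s b + s b * \<sigma> r b)"
  and vfield_cmult: "vfield A U \<sigma> \<Longrightarrow> smooth_fn A U r \<Longrightarrow> \<sigma> (\<lambda>b. c * r b) = (\<lambda>b. c * \<sigma> r b)"
  unfolding vfield_def by blast+

lemma vfield_zero: assumes "vfield A U \<sigma>" shows "\<sigma> (\<lambda>b. 0) = (\<lambda>b. 0)"
  using vfield_cmult[OF assms, of "\<lambda>b. 0" 0] vfield_nonsmooth[OF assms] by fastforce

lemma vf10_imp_vfield: "vf10 A U \<sigma> \<Longrightarrow> vfield A U \<sigma>"
  and vf01_imp_vfield: "vf01 A U \<sigma> \<Longrightarrow> vfield A U \<sigma>"
  unfolding vf10_def vf01_def by blast+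

lemma vconj_vconj [simp]: "vconj (vconj \<sigma>) = \<sigma>"
  unfolding vconj_def by simp

lemma vconj_vbracket: "vconj (vbracket \<sigma> \<tau>) = vbracket (vconj \<sigma>) (vconj \<tau>)"
  unfolding vconj_def vbracket_def by simp

lemma vfield_vconj:
  assumes M: "complex_manifold A" "open U" and \<sigma>: "vfield A U \<sigma>"
  shows "vfield A U (vconj \<sigma>)"
  unfolding vfield_def
proof (intro conjI allI impI)
  fix r assume "\<not> smooth_fn A U r"
  then show "vconj \<sigma> r = (\<lambda>b. 0)"
    using vfield_nonsmooth[OF \<sigma>] smooth_fn_cnj_iff[OF M] unfolding vconj_def by simp
next
  fix r assume "smooth_fn A U r"
  then show "smooth_fn A U (vconj \<sigma> r)"
    using vfield_smooth[OF \<sigma>] smooth_fn_cnj_iff[OF M] unfolding vconj_def by simp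
next
  fix r s assume "smooth_fn A U r \<and> smooth_fn A U s"
  then have "smooth_fn A U (\<lambda>x. cnj (r x))" "smooth_fn A U (\<lambda>x. cnj (s x))"
    using smooth_fn_cnj_iff[OF M] by auto
  then show "vconj \<sigma> (\<lambda>b. r b + s b) = (\<lambda>b. vconj \<sigma> r b + vconj \<sigma> s b)"
    and "vconj \<sigma> (\<lambda>b. r b * s b) = (\<lambda>b. r b * vconj \<sigma> s b + s b * vconj \<sigma> r b)"
    using vfield_add[OF \<sigma>] vfield_mult[OF \<sigma>] unfolding vconj_def by simp_all
next
  fix c r assume "smooth_fn A U r"
  then show "vconj \<sigma> (\<lambda>b. c * r b) = (\<lambda>b. c * vconj \<sigma> r b)"
    using vfield_cmult[OF \<sigma>, of "\<lambda>x. cnj (r x)" "cnj c"] smooth_fn_cnj_iff[OF M]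
    unfolding vconj_def by simp
qed

lemma vf10_vconj:
  assumes M: "complex_manifold A" "open U" and \<sigma>: "vf10 A U \<sigma>"
  shows "vf01 A U (vconj \<sigma>)"
  unfolding vf01_def
proof (intro conjI allI impI)
  show "vfield A U (vconj \<sigma>)" by (rule vfield_vconj[OF M vf10_imp_vfield[OF \<sigma>]])
next
  fix r b assume "smooth_fn A U r \<and> b \<in> U \<and>
      (\<exists>W h. open W \<and> b \<in> W \<and> W \<subseteq> U \<and> holo_on A W h \<and> (\<forall>x\<in>W. r x = h x))"
  then show "vconj \<sigma> r b = 0"
    using \<sigma> smooth_fn_cnj_iff[OF M, of r] unfolding vf10_def vconj_def by fastforce
qed

lemma vbracket_Leibniz:
  assumes M: "complex_manifold A" "open U" and \<sigma>: "vfield A U \<sigma>" and \<tau>: "vfield A U \<tau>"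
    and r: "smooth_fn A U r" and s: "smooth_fn A U s"
  shows "vbracket \<sigma> \<tau> (\<lambda>b. r b * s b) = (\<lambda>b. r b * vbracket \<sigma> \<tau> s b + s b * vbracket \<sigma> \<tau> r b)"
proof -
  have second_order: "\<sigma> (\<tau> (\<lambda>b. r b * s b)) =
      (\<lambda>b. r b * \<sigma> (\<tau> s) b + \<tau> s b * \<sigma> r b + s b * \<sigma> (\<tau> r) b + \<tau> r b * \<sigma> s b)"
    if \<sigma>: "vfield A U \<sigma>" and \<tau>: "vfield A U \<tau>" for \<sigma> \<tau>
  proof -
    have "smooth_fn A U (\<tau> r)" "smooth_fn A U (\<tau> s)"
      using vfield_smooth[OF \<tau>] r s by auto
    then show ?thesis
      using vfield_mult[OF \<tau> r s] vfield_add[OF \<sigma>] vfield_mult[OF \<sigma>] smooth_fn_mult[OF M] r s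
      by (simp add: algebra_simps)
  qed
  show ?thesis
    unfolding vbracket_def second_order[OF \<sigma> \<tau>] second_order[OF \<tau> \<sigma>]
    by (simp add: fun_eq_iff algebra_simps)
qed

lemma vfield_vbracket:
  assumes M: "complex_manifold A" "open U" and \<sigma>: "vfield A U \<sigma>" and \<tau>: "vfield A U \<tau>"
  shows "vfield A U (vbracket \<sigma> \<tau>)"
  unfolding vfield_def
proof (intro conjI allI impI)
  fix r assume "\<not> smooth_fn A U r"
  then show "vbracket \<sigma> \<tau> r = (\<lambda>b. 0)"
    unfolding vbracket_def
    using vfield_nonsmooth[OF \<sigma>] vfield_nonsmooth[OF \<tau>] vfield_zero[OF \<sigma>] vfield_zero[OF \<tau>] by simp
next
  fix r assume "smooth_fn A U r"
  then show "smooth_fn A U (vbracket \<sigma> \<tau> r)"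
    unfolding vbracket_def using smooth_fn_diff[OF M] vfield_smooth[OF \<sigma>] vfield_smooth[OF \<tau>] by auto
next
  fix r s assume rs: "smooth_fn A U r \<and> smooth_fn A U s"
  have "\<rho> (\<rho>' (\<lambda>b. r b + s b)) = (\<lambda>b. \<rho> (\<rho>' r) b + \<rho> (\<rho>' s) b)"
    if \<rho>: "vfield A U \<rho>" and \<rho>': "vfield A U \<rho>'" for \<rho> \<rho>'
    using vfield_add[OF \<rho>'] vfield_add[OF \<rho>] vfield_smooth[OF \<rho>'] rs by simp
  from this[OF \<sigma> \<tau>] this[OF \<tau> \<sigma>]
  show "vbracket \<sigma> \<tau> (\<lambda>b. r b + s b) = (\<lambda>b. vbracket \<sigma> \<tau> r b + vbracket \<sigma> \<tau> s b)"
    unfolding vbracket_def by (simp add: fun_eq_iff)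
  show "vbracket \<sigma> \<tau> (\<lambda>b. r b * s b) = (\<lambda>b. r b * vbracket \<sigma> \<tau> s b + s b * vbracket \<sigma> \<tau> r b)"
    using vbracket_Leibniz[OF M \<sigma> \<tau>] rs by blast
next
  fix c r assume "smooth_fn A U r"
  then show "vbracket \<sigma> \<tau> (\<lambda>b. c * r b) = (\<lambda>b. c * vbracket \<sigma> \<tau> r b)"
    unfolding vbracket_def using vfield_cmult[OF \<sigma>] vfield_cmult[OF \<tau>] vfield_smooth[OF \<sigma>] vfield_smooth[OF \<tau>]
    by (simp add: right_diff_distrib)
qed

lemma holo_on_zero: "holo_on A W (\<lambda>_. 0)"
  unfolding holo_on_def cx_holo_fun_def by (auto intro!: exI[of _ "\<lambda>_. 0"] simp: o_def)

lemma vf01_vbracket: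
  assumes M: "complex_manifold A" "open U" and \<sigma>: "vf01 A U \<sigma>" and \<tau>: "vf01 A U \<tau>"
  shows "vf01 A U (vbracket \<sigma> \<tau>)"
  unfolding vf01_def
proof (intro conjI allI impI)
  show "vfield A U (vbracket \<sigma> \<tau>)"
    by (rule vfield_vbracket[OF M vf01_imp_vfield[OF \<sigma>] vf01_imp_vfield[OF \<tau>]])
next
  fix r b assume "smooth_fn A U r \<and> b \<in> U \<and>
      (\<exists>W h. open W \<and> b \<in> W \<and> W \<subseteq> U \<and> holo_on A W h \<and> (\<forall>x\<in>W. r x = h x))"
  then obtain W h where r: "smooth_fn A U r" and b: "b \<in> U" and W: "open W" "b \<in> W" "W \<subseteq> U"
    and h: "holo_on A W h" "\<forall>x\<in>W. r x = h x" by blast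
  \<comment> \<open>A (0,1)-field kills r on all of W, so the function it produces is zero, hence holomorphic, on W.\<close>
  have "\<rho> (\<rho>' r) b = 0" if \<rho>: "vf01 A U \<rho>" and \<rho>': "vf01 A U \<rho>'" for \<rho> \<rho>'
  proof -
    have "\<forall>x\<in>W. \<rho>' r x = 0" using \<rho>' r W h unfolding vf01_def by blast
    moreover have "smooth_fn A U (\<rho>' r)" using vfield_smooth[OF vf01_imp_vfield[OF \<rho>'] r] .
    ultimately show ?thesis
      using \<rho> b W holo_on_zero[of A W] unfolding vf01_def by fastforce
  qed
  from this[OF \<sigma> \<tau>] this[OF \<tau> \<sigma>] show "vbracket \<sigma> \<tau> r b = 0" unfolding vbracket_def by simp
qed

section \<open>Curvature of metric connections\<close>

locale metric_connection =
  fixes A :: "('b::{t2_space,second_countable_topology} set \<times> ('b \<Rightarrow> complex^'n)) set"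
    and sc :: "complex \<Rightarrow> 'v::ab_group_add \<Rightarrow> 'v"
    and L :: "'b \<Rightarrow> 'v set" and ip :: "'b \<Rightarrow> 'v \<Rightarrow> 'v \<Rightarrow> complex"
    and S :: "'b set \<Rightarrow> ('b \<Rightarrow> 'v) set" and D :: "('b,'v) conn"
  assumes manifold: "complex_manifold A"
    and fibre: "pre_hilbert_fibre sc (L b) (ip b)"
    and section_mem: "open U \<Longrightarrow> f \<in> S U \<Longrightarrow> f b \<in> L b"
    and conn_mem: "open U \<Longrightarrow> vfield A U \<sigma> \<Longrightarrow> f \<in> S U \<Longrightarrow> D U \<sigma> f \<in> S U"
    and smooth_ip: "smooth_metric A ip S"
    and compatible: "metric_compatible A ip S D"
begin

lemma vfield_ip:
  "open U \<Longrightarrow> vfield A U \<sigma> \<Longrightarrow> f \<in> S U \<Longrightarrow> g \<in> S U \<Longrightarrow>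
    \<sigma> (\<lambda>b. ip b (f b) (g b)) = (\<lambda>b. ip b (D U \<sigma> f b) (g b) + ip b (f b) (D U (vconj \<sigma>) g b))"
  using compatible unfolding metric_compatible_def by blast

lemma smooth_fn_ip: "open U \<Longrightarrow> f \<in> S U \<Longrightarrow> g \<in> S U \<Longrightarrow> smooth_fn A U (\<lambda>b. ip b (f b) (g b))"
  using smooth_ip unfolding smooth_metric_def by blast

lemma vfield_vfield_ip:
  assumes U: "open U" and \<sigma>: "vfield A U \<sigma>" and \<tau>: "vfield A U \<tau>" and f: "f \<in> S U" and g: "g \<in> S U"
  shows "\<sigma> (\<tau> (\<lambda>b. ip b (f b) (g b))) =
    (\<lambda>b. ip b (D U \<sigma> (D U \<tau> f) b) (g b) + ip b (D U \<tau> f b) (D U (vconj \<sigma>) g b)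
       + ip b (D U \<sigma> f b) (D U (vconj \<tau>) g b) + ip b (f b) (D U (vconj \<sigma>) (D U (vconj \<tau>) g) b))"
proof -
  have \<tau>': "vfield A U (vconj \<tau>)" using vfield_vconj[OF manifold U \<tau>] .
  have "\<sigma> (\<tau> (\<lambda>b. ip b (f b) (g b))) =
      (\<lambda>b. \<sigma> (\<lambda>b. ip b (D U \<tau> f b) (g b)) b + \<sigma> (\<lambda>b. ip b (f b) (D U (vconj \<tau>) g b)) b)"
    unfolding vfield_ip[OF U \<tau> f g]
    by (rule vfield_add[OF \<sigma>]) (simp_all add: smooth_fn_ip U f g conn_mem \<tau> \<tau>')
  then show ?thesis
    using vfield_ip[OF U \<sigma>] conn_mem[OF U] \<tau> \<tau>' f g by (simp add: algebra_simps)
qed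

lemma ip_curv_left:
  assumes U: "open U" and \<sigma>: "vfield A U \<sigma>" and \<tau>: "vfield A U \<tau>" and f: "f \<in> S U" and y: "y \<in> L b"
  shows "ip b (curv D U \<sigma> \<tau> f b) y =
    ip b (D U \<sigma> (D U \<tau> f) b) y - ip b (D U \<tau> (D U \<sigma> f) b) y - ip b (D U (vbracket \<sigma> \<tau>) f b) y"
proof -
  have mem: "D U \<sigma> (D U \<tau> f) b \<in> L b" "D U \<tau> (D U \<sigma> f) b \<in> L b" "D U (vbracket \<sigma> \<tau>) f b \<in> L b"
    using section_mem[OF U] conn_mem[OF U] vfield_vbracket[OF manifold U \<sigma> \<tau>] \<sigma> \<tau> f by blast+
  then show ?thesis
    unfolding curv_def using pre_hilbert_fibre.ip_diff_left[OF fibre] pre_hilbert_fibre.diff_mem[OF fibre] y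
    by simp
qed

lemma ip_curv_right:
  assumes U: "open U" and \<sigma>: "vfield A U \<sigma>" and \<tau>: "vfield A U \<tau>" and f: "f \<in> S U" and y: "y \<in> L b"
  shows "ip b y (curv D U \<sigma> \<tau> f b) =
    ip b y (D U \<sigma> (D U \<tau> f) b) - ip b y (D U \<tau> (D U \<sigma> f) b) - ip b y (D U (vbracket \<sigma> \<tau>) f b)"
proof -
  have mem: "D U \<sigma> (D U \<tau> f) b \<in> L b" "D U \<tau> (D U \<sigma> f) b \<in> L b" "D U (vbracket \<sigma> \<tau>) f b \<in> L b"
    using section_mem[OF U] conn_mem[OF U] vfield_vbracket[OF manifold U \<sigma> \<tau>] \<sigma> \<tau> f by blast+
  then show ?thesis
    unfolding curv_def using pre_hilbert_fibre.ip_diff_right[OF fibre] pre_hilbert_fibre.diff_mem[OF fibre] y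
    by simp
qed

lemma ip_curv_skew:
  assumes U: "open U" and \<sigma>: "vfield A U \<sigma>" and \<tau>: "vfield A U \<tau>" and f: "f \<in> S U" and g: "g \<in> S U"
  shows "ip b (curv D U \<sigma> \<tau> f b) (g b) = - ip b (f b) (curv D U (vconj \<sigma>) (vconj \<tau>) g b)"
proof -
  have \<sigma>': "vfield A U (vconj \<sigma>)" and \<tau>': "vfield A U (vconj \<tau>)"
    using vfield_vconj[OF manifold U] \<sigma> \<tau> by blast+
  have "vbracket \<sigma> \<tau> (\<lambda>b. ip b (f b) (g b)) b =
      ip b (D U (vbracket \<sigma> \<tau>) f b) (g b) + ip b (f b) (D U (vbracket (vconj \<sigma>) (vconj \<tau>)) g b)"
    using vfield_ip[OF U vfield_vbracket[OF manifold U \<sigma> \<tau>] f g] by (simp add: vconj_vbracket)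
  moreover have "vbracket \<sigma> \<tau> (\<lambda>b. ip b (f b) (g b)) b =
      (ip b (D U \<sigma> (D U \<tau> f) b) (g b) - ip b (D U \<tau> (D U \<sigma> f) b) (g b))
      + (ip b (f b) (D U (vconj \<sigma>) (D U (vconj \<tau>) g) b) - ip b (f b) (D U (vconj \<tau>) (D U (vconj \<sigma>) g) b))"
    unfolding vbracket_def vfield_vfield_ip[OF U \<sigma> \<tau> f g] vfield_vfield_ip[OF U \<tau> \<sigma> f g]
    by (simp add: algebra_simps)
  ultimately show ?thesis
    unfolding eq_neg_iff_add_eq_0
      ip_curv_left[OF U \<sigma> \<tau> f section_mem[OF U g]] ip_curv_right[OF U \<sigma>' \<tau>' g section_mem[OF U f]]
    by (simp add: algebra_simps)
qed

end

section \<open>The induced connection on a BLS subfield\<close>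

lemma hilbert_field_fibre:
  assumes "hilbert_field sc L ip" shows "hilbert_fibre sc (L b) (ip b)"
proof -
  note F = assms[unfolded hilbert_field_def fnorm_def, THEN conjunct2, THEN spec[of _ b]]
  note C1 = conjunct1 and C2 = conjunct2
  show ?thesis
  proof (intro hilbert_fibre.intro pre_hilbert_fibre.intro pre_hilbert_fibre_axioms.intro
      hilbert_fibre_axioms.intro)
    show "vector_space sc" using assms unfolding hilbert_field_def by (rule C1)
    show "0 \<in> L b" using F by (rule C1)
    show "x \<in> L b \<Longrightarrow> y \<in> L b \<Longrightarrow> x + y \<in> L b" for x y
      using F[THEN C2, THEN C1] by blast
    show "x \<in> L b \<Longrightarrow> sc c x \<in> L b" for x c
      using F[THEN C2, THEN C2, THEN C1] by blast
    show "x \<in> L b \<Longrightarrow> y \<in> L b \<Longrightarrow> z \<in> L b \<Longrightarrow> ip b (x + y) z = ip b x z + ip b y z" for x y z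
      using F[THEN C2, THEN C2, THEN C2, THEN C1] by blast
    show "x \<in> L b \<Longrightarrow> y \<in> L b \<Longrightarrow> ip b (sc c x) y = c * ip b x y" for x y c
      using F[THEN C2, THEN C2, THEN C2, THEN C2, THEN C1] by blast
    show "x \<in> L b \<Longrightarrow> y \<in> L b \<Longrightarrow> ip b y x = cnj (ip b x y)" for x y
      using F[THEN C2, THEN C2, THEN C2, THEN C2, THEN C2, THEN C1] by blast
    show "x \<in> L b \<Longrightarrow> x \<noteq> 0 \<Longrightarrow> 0 < Re (ip b x x)" for x
      using F[THEN C2, THEN C2, THEN C2, THEN C2, THEN C2, THEN C2, THEN C1] by blast
    show "\<forall>n. X n \<in> L b \<Longrightarrow> \<forall>e>0. \<exists>N. \<forall>m\<ge>N. \<forall>n\<ge>N. sqrt (Re (ip b (X m - X n) (X m - X n))) < e \<Longrightarrow>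
        \<exists>x\<in>L b. (\<lambda>n. sqrt (Re (ip b (X n - x) (X n - x)))) \<longlonglongrightarrow> 0" for X
      using F[THEN C2, THEN C2, THEN C2, THEN C2, THEN C2, THEN C2, THEN C2] by blast
  qed
qed
lemma BLS_subfield_fibre:
  assumes "hilbert_field sc L ip" "BLS_subfield A sc L ip Sm dbar H"
  shows "closed_subspace sc (L b) (ip b) (H b)"
proof -
  note F = assms(2)[unfolded BLS_subfield_def fnorm_def, THEN conjunct1, THEN spec[of _ b]]
  note C1 = conjunct1 and C2 = conjunct2
  show ?thesis
  proof (intro closed_subspace.intro closed_subspace_axioms.intro hilbert_field_fibre[OF assms(1)])
    show "H b \<subseteq> L b" using F by (rule C1)
    show "0 \<in> H b" using F[THEN C2] by (rule C1)
    show "x \<in> H b \<Longrightarrow> y \<in> H b \<Longrightarrow> x + y \<in> H b" for x y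
      using F[THEN C2, THEN C2, THEN C1] by blast
    show "x \<in> H b \<Longrightarrow> sc c x \<in> H b" for x c
      using F[THEN C2, THEN C2, THEN C2, THEN C1] by blast
    show "\<forall>n. X n \<in> H b \<Longrightarrow> x \<in> L b \<Longrightarrow> (\<lambda>n. sqrt (Re (ip b (X n - x) (X n - x)))) \<longlonglongrightarrow> 0 \<Longrightarrow>
        x \<in> H b" for X x
      using F[THEN C2, THEN C2, THEN C2, THEN C2] by blast
  qed
qed

locale BLS_pair =
  fixes A :: "('b::{t2_space,second_countable_topology} set \<times> ('b \<Rightarrow> complex^'n)) set"
    and sc :: "complex \<Rightarrow> 'v::ab_group_add \<Rightarrow> 'v"
    and L H :: "'b \<Rightarrow> 'v set" and ip :: "'b \<Rightarrow> 'v \<Rightarrow> 'v \<Rightarrow> complex"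
    and Sm :: "'b set \<Rightarrow> ('b \<Rightarrow> 'v) set" and nab dbar :: "('b,'v) conn"
  assumes manifold: "complex_manifold A"
    and field: "BLS_field A sc L ip Sm nab dbar"
    and subfield: "BLS_subfield A sc L ip Sm dbar H"
begin

lemma hilbert: "hilbert_field sc L ip"
  and smooth_struct: "smooth_structure A sc L ip Sm"
  and smooth_metric: "smooth_metric A ip Sm"
  and connection: "connection A sc Sm nab"
  and compatible: "metric_compatible A ip Sm nab"
  using field[unfolded BLS_field_def smooth_hilbert_field_def, THEN conjunct1] by simp_all

lemma nab_eq_dbar: "open U \<Longrightarrow> vf01 A U \<sigma> \<Longrightarrow> f \<in> Sm U \<Longrightarrow> nab U \<sigma> f = dbar U \<sigma> f"
  using field[unfolded BLS_field_def, THEN conjunct2, THEN conjunct2] by blast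

lemma dbar_SmSub: "open U \<Longrightarrow> vf01 A U \<sigma> \<Longrightarrow> f \<in> SmSub Sm H U \<Longrightarrow> dbar U \<sigma> f \<in> SmSub Sm H U"
  using subfield[unfolded BLS_subfield_def, THEN conjunct2, THEN conjunct2, THEN conjunct1] by blast

lemma proj_smooth: "open U \<Longrightarrow> f \<in> Sm U \<Longrightarrow> (\<lambda>b. proj ip H b (f b)) \<in> Sm U"
  using subfield[unfolded BLS_subfield_def, THEN conjunct2, THEN conjunct2, THEN conjunct2] by blast

lemma fibre: "closed_subspace sc (L b) (ip b) (H b)"
  by (rule BLS_subfield_fibre[OF hilbert subfield])

lemma pre_hilbert: "pre_hilbert_fibre sc (L b) (ip b)"
  by (rule hilbert_fibre.axioms(1)[OF hilbert_field_fibre[OF hilbert]])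

lemma nab_smooth: "open U \<Longrightarrow> vfield A U \<sigma> \<Longrightarrow> f \<in> Sm U \<Longrightarrow> nab U \<sigma> f \<in> Sm U"
  using connection[unfolded connection_def, rule_format, THEN conjunct1] by blast

lemma smooth_section: "open U \<Longrightarrow> f \<in> Sm U \<Longrightarrow> section_on L U f"
  using smooth_struct[unfolded smooth_structure_def, THEN conjunct1, rule_format, THEN conjunct1] by blast

lemma smooth_section_mem: assumes "open U" "f \<in> Sm U" shows "f b \<in> L b"
  using smooth_section[OF assms] closed_subspace.mem_V[OF fibre closed_subspace.zero_mem_H[OF fibre]]
  unfolding section_on_def by (cases "b \<in> U") auto

lemma SmSub_imp_Sm: "f \<in> SmSub Sm H U \<Longrightarrow> f \<in> Sm U"
  unfolding SmSub_def by blast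

lemma SmSub_mem: assumes "open U" "f \<in> SmSub Sm H U" shows "f b \<in> H b"
  using smooth_section[OF assms(1) SmSub_imp_Sm[OF assms(2)]] assms(2) closed_subspace.zero_mem_H[OF fibre]
  unfolding section_on_def SmSub_def by (cases "b \<in> U") auto

lemma SmSub_mem_L: "open U \<Longrightarrow> f \<in> SmSub Sm H U \<Longrightarrow> f b \<in> L b"
  using SmSub_mem closed_subspace.mem_V[OF fibre] by blast

lemma proj_eq_orth_proj: "proj ip H b x = closed_subspace.orth_proj (ip b) (H b) x"
  by (simp add: proj_def closed_subspace.orth_proj_def[OF fibre])

lemma proj_mem: "x \<in> L b \<Longrightarrow> proj ip H b x \<in> H b"
  using closed_subspace.orth_proj_spec(1)[OF fibre] by (simp add: proj_eq_orth_proj)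

lemma proj_id: "x \<in> H b \<Longrightarrow> proj ip H b x = x"
  using closed_subspace.orth_proj_id[OF fibre] by (simp add: proj_eq_orth_proj)

lemma ip_proj_left: "x \<in> L b \<Longrightarrow> z \<in> H b \<Longrightarrow> ip b (proj ip H b x) z = ip b x z"
  using closed_subspace.ip_orth_proj_left[OF fibre] by (simp add: proj_eq_orth_proj)

lemma ip_proj_right: "x \<in> H b \<Longrightarrow> y \<in> L b \<Longrightarrow> ip b x (proj ip H b y) = ip b x y"
  using closed_subspace.ip_orth_proj_right[OF fibre] by (simp add: proj_eq_orth_proj)

lemma ip_proj_perp: "x \<in> L b \<Longrightarrow> y \<in> L b \<Longrightarrow>
    ip b (x - proj ip H b x) y = ip b (proj_perp ip H b x) (proj_perp ip H b y)"
  using closed_subspace.ip_orth_complement[OF fibre] by (simp add: proj_eq_orth_proj proj_perp_def)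

sublocale ambient: metric_connection A sc L ip Sm nab
  by (rule metric_connection.intro)
    (fact manifold pre_hilbert smooth_section_mem nab_smooth smooth_metric compatible)+

lemma induced_conn_SmSub:
  assumes "open U" "vfield A U \<sigma>" "f \<in> Sm U" shows "induced_conn ip H nab U \<sigma> f \<in> SmSub Sm H U"
  unfolding induced_conn_def SmSub_def
  using proj_smooth[OF assms(1) nab_smooth[OF assms]] proj_mem smooth_section_mem[OF assms(1) nab_smooth[OF assms]]
  by blast

lemma ip_induced_conn_left:
  "open U \<Longrightarrow> vfield A U \<sigma> \<Longrightarrow> f \<in> Sm U \<Longrightarrow> z \<in> H b \<Longrightarrow>
    ip b (induced_conn ip H nab U \<sigma> f b) z = ip b (nab U \<sigma> f b) z"
  unfolding induced_conn_def using ip_proj_left smooth_section_mem nab_smooth by blast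

lemma ip_induced_conn_right:
  "open U \<Longrightarrow> vfield A U \<sigma> \<Longrightarrow> f \<in> Sm U \<Longrightarrow> z \<in> H b \<Longrightarrow>
    ip b z (induced_conn ip H nab U \<sigma> f b) = ip b z (nab U \<sigma> f b)"
  unfolding induced_conn_def using ip_proj_right smooth_section_mem nab_smooth by blast

lemma nab_vf01_SmSub:
  "open U \<Longrightarrow> vf01 A U \<sigma> \<Longrightarrow> f \<in> SmSub Sm H U \<Longrightarrow> nab U \<sigma> f \<in> SmSub Sm H U"
  using nab_eq_dbar dbar_SmSub SmSub_imp_Sm by metis

lemma induced_conn_vf01_eq_nab:
  "open U \<Longrightarrow> vf01 A U \<sigma> \<Longrightarrow> f \<in> SmSub Sm H U \<Longrightarrow> induced_conn ip H nab U \<sigma> f = nab U \<sigma> f"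
  unfolding induced_conn_def using proj_id SmSub_mem nab_vf01_SmSub by fastforce

lemma induced_conn_SmSub_closed:
  "open U \<Longrightarrow> vfield A U \<sigma> \<Longrightarrow> f \<in> SmSub Sm H U \<Longrightarrow> induced_conn ip H nab U \<sigma> f \<in> SmSub Sm H U"
  using induced_conn_SmSub SmSub_imp_Sm by blast

lemma smooth_metric_SmSub: "smooth_metric A ip (SmSub Sm H)"
  using smooth_metric SmSub_imp_Sm unfolding smooth_metric_def by blast

lemma induced_conn_metric_compatible: "metric_compatible A ip (SmSub Sm H) (induced_conn ip H nab)"
  unfolding metric_compatible_def
proof (intro allI ballI impI, rule ext)
  fix U \<sigma> f g b assume f: "f \<in> SmSub Sm H U" and g: "g \<in> SmSub Sm H U" and U\<sigma>: "open U \<and> vfield A U \<sigma>"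
  then have U: "open U" and \<sigma>: "vfield A U \<sigma>" and \<sigma>': "vfield A U (vconj \<sigma>)"
    using vfield_vconj[OF manifold] by blast+
  have "ip b (induced_conn ip H nab U \<sigma> f b) (g b) = ip b (nab U \<sigma> f b) (g b)"
    by (rule ip_induced_conn_left[OF U \<sigma> SmSub_imp_Sm[OF f] SmSub_mem[OF U g]])
  moreover have "ip b (f b) (induced_conn ip H nab U (vconj \<sigma>) g b) = ip b (f b) (nab U (vconj \<sigma>) g b)"
    by (rule ip_induced_conn_right[OF U \<sigma>' SmSub_imp_Sm[OF g] SmSub_mem[OF U f]])
  ultimately show "\<sigma> (\<lambda>b. ip b (f b) (g b)) b = ip b (induced_conn ip H nab U \<sigma> f b) (g b)
      + ip b (f b) (induced_conn ip H nab U (vconj \<sigma>) g b)"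
    using ambient.vfield_ip[OF U \<sigma> SmSub_imp_Sm[OF f] SmSub_imp_Sm[OF g]] by simp
qed

sublocale induced: metric_connection A sc L ip "SmSub Sm H" "induced_conn ip H nab"
  by (rule metric_connection.intro)
    (fact manifold pre_hilbert SmSub_mem_L induced_conn_SmSub_closed smooth_metric_SmSub
      induced_conn_metric_compatible)+

lemma induced_conn_eq_dbar:
  "open U \<Longrightarrow> vf01 A U \<sigma> \<Longrightarrow> f \<in> SmSub Sm H U \<Longrightarrow> induced_conn ip H nab U \<sigma> f = dbar U \<sigma> f"
  using induced_conn_vf01_eq_nab nab_eq_dbar SmSub_imp_Sm by metis

lemma curv_induced_vf01:
  assumes integrable: "integrable_acs A (SmSub Sm H) dbar"
    and U: "open U" and \<sigma>: "vf01 A U \<sigma>" and \<tau>: "vf01 A U \<tau>" and f: "f \<in> SmSub Sm H U"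
  shows "curv (induced_conn ip H nab) U \<sigma> \<tau> f = (\<lambda>b. 0)"
proof -
  have "dbar U \<sigma> f \<in> SmSub Sm H U" "dbar U \<tau> f \<in> SmSub Sm H U"
    using dbar_SmSub[OF U] \<sigma> \<tau> f by blast+
  then have "curv (induced_conn ip H nab) U \<sigma> \<tau> f =
      (\<lambda>b. dbar U \<sigma> (dbar U \<tau> f) b - dbar U \<tau> (dbar U \<sigma> f) b - dbar U (vbracket \<sigma> \<tau>) f b)"
    unfolding curv_def using induced_conn_eq_dbar[OF U] vf01_vbracket[OF manifold U \<sigma> \<tau>] \<sigma> \<tau> f
    by simp
  also have "\<dots> = (\<lambda>b. 0)"
    using integrable U \<sigma> \<tau> f unfolding integrable_acs_def by blast
  finally show ?thesis .
qed

lemma curv_induced_vf10: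
  assumes integrable: "integrable_acs A (SmSub Sm H) dbar"
    and U: "open U" and \<sigma>: "vf10 A U \<sigma>" and \<tau>: "vf10 A U \<tau>" and f: "f \<in> SmSub Sm H U"
  shows "curv (induced_conn ip H nab) U \<sigma> \<tau> f = (\<lambda>b. 0)"
proof
  fix b
  let ?nabH = "induced_conn ip H nab" and ?\<Theta> = "curv (induced_conn ip H nab) U \<sigma> \<tau> f b"
  have \<sigma>v: "vfield A U \<sigma>" and \<tau>v: "vfield A U \<tau>" using \<sigma> \<tau> vf10_imp_vfield by blast+
  have orth: "ip b ?\<Theta> (c b) = 0" if c: "c \<in> SmSub Sm H U" for c
    using induced.ip_curv_skew[OF U \<sigma>v \<tau>v f c]
      curv_induced_vf01[OF integrable U vf10_vconj[OF manifold U \<sigma>] vf10_vconj[OF manifold U \<tau>] c]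
      pre_hilbert_fibre.ip_zero_right[OF pre_hilbert SmSub_mem_L[OF U f]] by simp
  have \<Theta>: "?\<Theta> \<in> L b"
    unfolding curv_def
    using SmSub_mem_L[OF U] induced.conn_mem[OF U] vfield_vbracket[OF manifold U \<sigma>v \<tau>v] \<sigma>v \<tau>v f
      pre_hilbert_fibre.diff_mem[OF pre_hilbert] by meson
  have "ip b ?\<Theta> ?\<Theta> = 0"
    using induced.ip_curv_right[OF U \<sigma>v \<tau>v f \<Theta>] orth induced.conn_mem[OF U]
      vfield_vbracket[OF manifold U \<sigma>v \<tau>v] \<sigma>v \<tau>v f by simp
  then show "?\<Theta> = 0" using pre_hilbert_fibre.ip_self_eq_0[OF pre_hilbert \<Theta>] by blast
qed

lemma ip_nab_proj_perp:
  assumes U: "open U" and \<rho>: "vfield A U \<rho>" and h: "h \<in> Sm U" and g: "g \<in> SmSub Sm H U"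
  shows "ip b (nab U \<rho> h b) (g b) = ip b (nab U \<rho> (\<lambda>b. proj ip H b (h b)) b) (g b)
    - ip b (proj_perp ip H b (h b)) (proj_perp ip H b (nab U (vconj \<rho>) g b))"
proof -
  define Ph where "Ph = (\<lambda>b. proj ip H b (h b))"
  define k where "k = nab U (vconj \<rho>) g"
  have Ph: "Ph \<in> Sm U" unfolding Ph_def by (rule proj_smooth[OF U h])
  have k: "k b \<in> L b"
    unfolding k_def using smooth_section_mem[OF U nab_smooth[OF U vfield_vconj[OF manifold U \<rho>]]]
      SmSub_imp_Sm[OF g] by blast
  \<comment> \<open>Differentiate both sides of (h, g) = (P h, g) along rho.\<close>
  have "(\<lambda>b. ip b (h b) (g b)) = (\<lambda>b. ip b (Ph b) (g b))"
    unfolding Ph_def using ip_proj_left smooth_section_mem[OF U h] SmSub_mem[OF U g] by simp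
  then have "ip b (nab U \<rho> h b) (g b) + ip b (h b) (k b) = ip b (nab U \<rho> Ph b) (g b) + ip b (Ph b) (k b)"
    using ambient.vfield_ip[OF U \<rho> h SmSub_imp_Sm[OF g]] ambient.vfield_ip[OF U \<rho> Ph SmSub_imp_Sm[OF g]]
    unfolding k_def by metis
  moreover have "ip b (h b) (k b) - ip b (Ph b) (k b) =
      ip b (proj_perp ip H b (h b)) (proj_perp ip H b (k b))"
    unfolding Ph_def
    using pre_hilbert_fibre.ip_diff_left[OF pre_hilbert] smooth_section_mem[OF U h] proj_mem
      closed_subspace.mem_V[OF fibre] ip_proj_perp k
    by metis
  ultimately show ?thesis unfolding Ph_def k_def by (simp add: algebra_simps)
qed

lemma ip_curv_induced_mixed:
  assumes U: "open U" and \<sigma>: "vfield A U \<sigma>" and \<tau>: "vf01 A U \<tau>"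
    and f: "f \<in> SmSub Sm H U" and g: "g \<in> SmSub Sm H U"
  shows "ip b (curv (induced_conn ip H nab) U \<sigma> \<tau> f b) (g b) = ip b (curv nab U \<sigma> \<tau> f b) (g b)
    - ip b (proj_perp ip H b (nab U \<sigma> f b)) (proj_perp ip H b (nab U (vconj \<tau>) g b))"
proof -
  let ?nabH = "induced_conn ip H nab"
  have \<tau>v: "vfield A U \<tau>" and \<sigma>\<tau>: "vfield A U (vbracket \<sigma> \<tau>)"
    using vf01_imp_vfield[OF \<tau>] vfield_vbracket[OF manifold U \<sigma>] by blast+
  have f': "f \<in> Sm U" and gH: "g b \<in> H b" and gL: "g b \<in> L b"
    using SmSub_imp_Sm[OF f] SmSub_mem[OF U g] SmSub_mem_L[OF U g] by blast+
  have \<sigma>f: "?nabH U \<sigma> f \<in> SmSub Sm H U" by (rule induced_conn_SmSub[OF U \<sigma> f'])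
  have \<tau>f: "nab U \<tau> f \<in> Sm U" by (rule nab_smooth[OF U \<tau>v f'])
  have induced: "ip b (curv ?nabH U \<sigma> \<tau> f b) (g b) = ip b (nab U \<sigma> (nab U \<tau> f) b) (g b)
      - ip b (nab U \<tau> (?nabH U \<sigma> f) b) (g b) - ip b (nab U (vbracket \<sigma> \<tau>) f b) (g b)"
    using induced.ip_curv_left[OF U \<sigma> \<tau>v f gL] induced_conn_vf01_eq_nab[OF U \<tau>] f \<sigma>f
      ip_induced_conn_left[OF U \<sigma> \<tau>f gH] ip_induced_conn_left[OF U \<sigma>\<tau> f' gH] by simp
  have ambient: "ip b (curv nab U \<sigma> \<tau> f b) (g b) = ip b (nab U \<sigma> (nab U \<tau> f) b) (g b)
      - ip b (nab U \<tau> (nab U \<sigma> f) b) (g b) - ip b (nab U (vbracket \<sigma> \<tau>) f b) (g b)"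
    by (rule ambient.ip_curv_left[OF U \<sigma> \<tau>v f' gL])
  have second_fundamental: "ip b (nab U \<tau> (nab U \<sigma> f) b) (g b) = ip b (nab U \<tau> (?nabH U \<sigma> f) b) (g b)
      - ip b (proj_perp ip H b (nab U \<sigma> f b)) (proj_perp ip H b (nab U (vconj \<tau>) g b))"
    unfolding induced_conn_def by (rule ip_nab_proj_perp[OF U \<tau>v nab_smooth[OF U \<sigma> f'] g])
  show ?thesis unfolding induced ambient second_fundamental by (simp add: algebra_simps)
qed

end

theorem proposition2p12:
  fixes A :: "('b::{t2_space,second_countable_topology} set \<times> ('b \<Rightarrow> complex^'n)) set"
    and sc :: "complex \<Rightarrow> 'v::ab_group_add \<Rightarrow> 'v"
    and L H :: "'b \<Rightarrow> 'v set"
    and ip :: "'b \<Rightarrow> 'v \<Rightarrow> 'v \<Rightarrow> complex"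
    and Sm :: "'b set \<Rightarrow> ('b \<Rightarrow> 'v) set"
    and nab dbar :: "('b,'v) conn"
  assumes "complex_manifold A"
    and "BLS_field A sc L ip Sm nab dbar"
    and "BLS_subfield A sc L ip Sm dbar H"
    and "integrable_acs A (SmSub Sm H) dbar"
  shows "(\<forall>U \<sigma> \<tau>. \<forall>f\<in>SmSub Sm H U. open U \<and> vf10 A U \<sigma> \<and> vf10 A U \<tau> \<longrightarrow>
            curv (induced_conn ip H nab) U \<sigma> \<tau> f = (\<lambda>b. 0) \<and>
            curv (induced_conn ip H nab) U (vconj \<sigma>) (vconj \<tau>) f = (\<lambda>b. 0)) \<and>
         (\<forall>U \<sigma> \<tau>. \<forall>f\<in>SmSub Sm H U. \<forall>g\<in>SmSub Sm H U. open U \<and> vf10 A U \<sigma> \<and> vf10 A U \<tau> \<longrightarrow>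
            (\<forall>b\<in>U. ip b (curv (induced_conn ip H nab) U \<sigma> (vconj \<tau>) f b) (g b) =
                    ip b (curv nab U \<sigma> (vconj \<tau>) f b) (g b)
                    - ip b (proj_perp ip H b (nab U \<sigma> f b)) (proj_perp ip H b (nab U \<tau> g b))))"
proof -
  interpret BLS_pair A sc L H ip Sm nab dbar
    using assms(1-3) by (rule BLS_pair.intro)
  show ?thesis
  proof (intro conjI allI ballI impI; elim conjE)
    fix U \<sigma> \<tau> f assume "f \<in> SmSub Sm H U" "open U" "vf10 A U \<sigma>" "vf10 A U \<tau>"
    then show "curv (induced_conn ip H nab) U \<sigma> \<tau> f = (\<lambda>b. 0)"
      and "curv (induced_conn ip H nab) U (vconj \<sigma>) (vconj \<tau>) f = (\<lambda>b. 0)"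
      using curv_induced_vf10[OF assms(4)] curv_induced_vf01[OF assms(4)] vf10_vconj[OF manifold]
      by blast+
  next
    fix U \<sigma> \<tau> f g b assume "f \<in> SmSub Sm H U" "g \<in> SmSub Sm H U" "open U" "vf10 A U \<sigma>" "vf10 A U \<tau>"
    then show "ip b (curv (induced_conn ip H nab) U \<sigma> (vconj \<tau>) f b) (g b) =
        ip b (curv nab U \<sigma> (vconj \<tau>) f b) (g b)
        - ip b (proj_perp ip H b (nab U \<sigma> f b)) (proj_perp ip H b (nab U \<tau> g b))"
      using ip_curv_induced_mixed[OF _ vf10_imp_vfield vf10_vconj[OF manifold]] by simp
  qed
qed

end
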